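(* Let $n\ge 1$, let $\mathbf{X}=\{x_0,\dots,x_{n-1}\}$, and let $\pi$ be a linear transformation over $\mathbf{X}$. Then every unitary matrix $U$ of size $2^n\times 2^n$ has a unique (up to isomorphism) reduced and normalized linearly transformed QMDD (LTQMDD) respecting $\pi$, i.e., a unique reduced and normalized LTQMDD $(v,e,\pi)$ whose semantics is $U$.
   Context: Indices of vectors and matrices are $0$-based; a natural number $0\le i<2^n$ is identified with its $n$-bit Boolean vector $(b_0\cdots b_{n-1})_2$, where $b_k$ is the value of $x_k$ under the standard order $[x_0,\dots,x_{n-1}]$ (so $x_0$ is the most significant bit). Linear transformations. For $\mathbf{Y}\subseteq\mathbf{X}$, its linear combination is $\bigoplus_{x\in\mathbf{Y}}x$ (XOR). A set $\Pi$ of linear combinations is fully ranked if every $x\in\mathbf{X}$ is the XOR of some subset of $\Pi$. A linear transformation is a sequence $\pi=[\pi_0,\dots,\pi_{n-1}]$ whose entries are the $n$ elements of a fully ranked set of linear combinations. It induces a bijection $\pi:\{0,1\}^n\to\{0,1\}^n$ by $\pi(v)_i=\pi_i(v)$ (the value of the linear combination $\pi_i$ under the assignment $v$), hence a permutation of $\{0,\dots,2^n-1\}$. For a $2^n\times2^n$ matrix $U=(u_{i,j})$, the linearly transformed matrix $U^{\pi}$ is defined by $u^{\pi}_{i,j}=u_{\pi(i),\pi(j)}$ for $0\le i,j<2^n$. QMDDs. A QMDD is a rooted directed acyclic graph given by a root edge $e$ pointing to a root node $v$. Nodes are internal or terminal. Each internal node $v$ has an index $\mathrm{ind}(v)\in\{0,\dots,n-1\}$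 and four outgoing edges $e_0(v),e_1(v),e_2(v),e_3(v)$ to successors $v_0,v_1,v_2,v_3$; every edge (including the root edge) carries a complex weight $w(e)$. There is a single terminal node, labeled $1$, with index $n$ and no successors. Along every path from the root to the terminal, indices strictly increase. Semantics: for an edge $e$ pointing to node $v$ considered from level $j\le \mathrm{ind}(v)$, with $J_m$ the $m\times m$ all-ones matrix and $s=\mathrm{ind}(v)-j$: if $v$ is terminal, $M^j_{(v,e)}=w(e)\,J_{2^s}$; if $v$ is internal, $M^j_{(v,e)}=w(e)\,J_{2^s}\otimes\begin{bmatrix}M^{k}_{(v_0,e_0)}&M^{k}_{(v_1,e_1)}\\ M^{k}_{(v_2,e_2)}&M^{k}_{(v_3,e_3)}\end{bmatrix}$ with $k=\mathrm{ind}(v)+1$ (the four blocks correspond to row/column value of the variable at level $\mathrm{ind}(v)$: block $0$ = row $0$, column $0$; block $1$ = row $0$, column $1$; block $2$ = row $1$, column $0$; block $3$ = row $1$, column $1$). The matrix represented by the QMDD is $M^0_{(v,e)}$, a $2^n\times 2^n$ matrix. Reduced: two internal nodes are isomorphic if they have the same index and their corresponding outgoing edges point to the same nodes with the same weights. A QMDD is reduced if (RI) no two distinct internal nodes are isomorphic, and (RS) no internal node has all four outgoing edges pointing to the same node with the same weight. Normalized: for every internal node, the largest magnitude among the nonzero weights of its outgoing edges is $1$, and among the edges attaining that maximum magnitude, the leftmost one has weight exactly $1$. LTQMDDs. A linearly transformed QMDD is a triple $(v,e,\pi)$ consisting of a QMDD $(v,e)$ and a linear transformation $\pi$; it is said to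 respect $\pi$, and it is reduced/normalized if the QMDD $(v,e)$ is. Its semantics is the linearly transformed matrix $(M^0_{(v,e)})^{\pi}$ of the matrix represented by $(v,e)$.
   Formalization: A normalized QMDD also has every outgoing edge of weight 0 of an internal node pointing to the terminal node 1. The statement above fails without it. *)

theory Defs
  imports Complex_Main
begin

text \<open>A 2^n x 2^n complex matrix is represented by its entry function
  nat => nat => complex; only the entries with both indices below 2^n matter.\<close>

type_synonym cmatrix = "nat \<Rightarrow> nat \<Rightarrow> complex"

definition unitary_mat :: "nat \<Rightarrow> cmatrix \<Rightarrow> bool" where
  "unitary_mat N U \<longleftrightarrow>
     (\<forall>i<N. \<forall>j<N. (\<Sum>k<N. cnj (U k i) * U k j) = (if i = j then 1 else 0))"

definition mat_eq :: "nat \<Rightarrow> cmatrix \<Rightarrow> cmatrix \<Rightarrow> bool" where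
  "mat_eq N A B \<longleftrightarrow> (\<forall>i<N. \<forall>j<N. A i j = B i j)"

text \<open>Value b_k of variable x_k in the n-bit representation of i (x_0 is the
  most significant bit).\<close>
definition var_val :: "nat \<Rightarrow> nat \<Rightarrow> nat \<Rightarrow> bool" where
  "var_val n i k \<longleftrightarrow> odd (i div 2 ^ (n - 1 - k))"

text \<open>A linear combination over X = {x_0..x_(n-1)} is given by the set Y of
  (indices of) variables it XORs.\<close>

definition xor_lc :: "nat set set \<Rightarrow> nat set" where
  "xor_lc S = {x. odd (card {Y \<in> S. x \<in> Y})}"

definition fully_ranked :: "nat \<Rightarrow> nat set set \<Rightarrow> bool" where
  "fully_ranked n P \<longleftrightarrow> (\<forall>i<n. \<exists>S\<subseteq>P. xor_lc S = {i})"

definition is_lin_trans :: "nat \<Rightarrow> nat set list \<Rightarrow> bool" where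
  "is_lin_trans n \<pi> \<longleftrightarrow> length \<pi> = n \<and> distinct \<pi> \<and>
     (\<forall>Y \<in> set \<pi>. Y \<subseteq> {0..<n}) \<and> fully_ranked n (set \<pi>)"

definition lc_val :: "nat \<Rightarrow> nat set \<Rightarrow> nat \<Rightarrow> bool" where
  "lc_val n Y i \<longleftrightarrow> odd (card {x \<in> Y. var_val n i x})"

definition lt_perm :: "nat \<Rightarrow> nat set list \<Rightarrow> nat \<Rightarrow> nat" where
  "lt_perm n \<pi> i = (\<Sum>k<n. if lc_val n (\<pi> ! k) i then 2 ^ (n - 1 - k) else 0)"

definition lt_mat :: "nat \<Rightarrow> nat set list \<Rightarrow> cmatrix \<Rightarrow> cmatrix" where
  "lt_mat n \<pi> U = (\<lambda>i j. U (lt_perm n \<pi> i) (lt_perm n \<pi> j))"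

text \<open>Nodes are natural numbers.  \<open>inodes\<close> is the set of internal nodes,
  \<open>tnode\<close> the terminal node; \<open>ind v\<close>, \<open>succ v k\<close>, \<open>wt v k\<close> (k < 4) are the
  index, the k-th successor and the weight of the k-th outgoing edge of an
  internal node v; the root edge points to \<open>root\<close> and has weight \<open>root_wt\<close>.\<close>

record qmdd =
  inodes :: "nat set"
  tnode :: nat
  ind :: "nat \<Rightarrow> nat"
  succ :: "nat \<Rightarrow> nat \<Rightarrow> nat"
  wt :: "nat \<Rightarrow> nat \<Rightarrow> complex"
  root :: nat
  root_wt :: complex

definition all_nodes :: "qmdd \<Rightarrow> nat set" where
  "all_nodes Q = insert (tnode Q) (inodes Q)"

definition nind :: "nat \<Rightarrow> qmdd \<Rightarrow> nat \<Rightarrow> nat" where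
  "nind n Q v = (if v \<in> inodes Q then ind Q v else n)"

definition edge_rel :: "qmdd \<Rightarrow> (nat \<times> nat) set" where
  "edge_rel Q = {(v, succ Q v k) | v k. v \<in> inodes Q \<and> k < 4}"

definition is_qmdd :: "nat \<Rightarrow> qmdd \<Rightarrow> bool" where
  "is_qmdd n Q \<longleftrightarrow>
     finite (inodes Q) \<and> tnode Q \<notin> inodes Q \<and> root Q \<in> all_nodes Q \<and>
     (\<forall>v \<in> inodes Q. ind Q v < n) \<and>
     (\<forall>v \<in> inodes Q. \<forall>k<4. succ Q v k \<in> all_nodes Q \<and> ind Q v < nind n Q (succ Q v k)) \<and>
     (\<forall>v \<in> all_nodes Q. (root Q, v) \<in> (edge_rel Q)\<^sup>*)"

text \<open>Semantics.  \<open>nsem n Q v j r c\<close> is the (r,c) entry (global indices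
  r, c < 2^n) of the matrix represented by node v considered from level j,
  with edge weight 1; i.e. M^j_(v,e) = w(e) * nsem ...  Levels above ind(v)
  are skipped (the J factor), at level ind(v) the bits of x_ind(v) in r and c
  select the block.\<close>
function nsem :: "nat \<Rightarrow> qmdd \<Rightarrow> nat \<Rightarrow> nat \<Rightarrow> nat \<Rightarrow> nat \<Rightarrow> complex" where
  "nsem n Q v j r c =
     (if n \<le> j then 1
      else if v \<in> inodes Q \<and> ind Q v = j then
        (let k = 2 * (if var_val n r j then 1 else 0) + (if var_val n c j then 1 else 0)
         in wt Q v k * nsem n Q (succ Q v k) (Suc j) r c)
      else nsem n Q v (Suc j) r c)"
  by pat_completeness auto
termination
  by (relation "measure (\<lambda>(n, Q, v, j, r, c). n - j)") auto

definition qmdd_mat :: "nat \<Rightarrow> qmdd \<Rightarrow> cmatrix" where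
  "qmdd_mat n Q = (\<lambda>r c. root_wt Q * nsem n Q (root Q) 0 r c)"

definition iso_nodes :: "qmdd \<Rightarrow> nat \<Rightarrow> nat \<Rightarrow> bool" where
  "iso_nodes Q u v \<longleftrightarrow> ind Q u = ind Q v \<and>
     (\<forall>k<4. succ Q u k = succ Q v k \<and> wt Q u k = wt Q v k)"

definition reduced :: "qmdd \<Rightarrow> bool" where
  "reduced Q \<longleftrightarrow>
     (\<forall>u \<in> inodes Q. \<forall>v \<in> inodes Q. u \<noteq> v \<longrightarrow> \<not> iso_nodes Q u v) \<and>
     (\<forall>v \<in> inodes Q. \<not> (\<forall>k<4. succ Q v k = succ Q v 0 \<and> wt Q v k = wt Q v 0))"

text \<open>Normalization.  Besides the magnitude condition of the paper we impose
  the standard QMDD convention that 0-weighted edges point to the terminal.\<close>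
definition normalized :: "qmdd \<Rightarrow> bool" where
  "normalized Q \<longleftrightarrow>
     (\<forall>v \<in> inodes Q.
        (\<forall>k<4. wt Q v k = 0 \<longrightarrow> succ Q v k = tnode Q) \<and>
        (\<forall>k<4. cmod (wt Q v k) \<le> 1) \<and>
        (\<exists>k<4. cmod (wt Q v k) = 1 \<and> wt Q v k = 1 \<and>
               (\<forall>k'<k. cmod (wt Q v k') \<noteq> 1)))"

definition qmdd_iso :: "qmdd \<Rightarrow> qmdd \<Rightarrow> bool" where
  "qmdd_iso Q1 Q2 \<longleftrightarrow> (\<exists>f. bij_betw f (all_nodes Q1) (all_nodes Q2) \<and>
     f (tnode Q1) = tnode Q2 \<and> f ` inodes Q1 = inodes Q2 \<and>
     f (root Q1) = root Q2 \<and> root_wt Q1 = root_wt Q2 \<and>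
     (\<forall>v \<in> inodes Q1. ind Q2 (f v) = ind Q1 v \<and>
        (\<forall>k<4. succ Q2 (f v) k = f (succ Q1 v k) \<and> wt Q2 (f v) k = wt Q1 v k)))"

type_synonym ltqmdd = "qmdd \<times> nat set list"

definition is_ltqmdd :: "nat \<Rightarrow> ltqmdd \<Rightarrow> bool" where
  "is_ltqmdd n L \<longleftrightarrow> is_qmdd n (fst L) \<and> is_lin_trans n (snd L)"

definition lt_reduced :: "ltqmdd \<Rightarrow> bool" where
  "lt_reduced L \<longleftrightarrow> reduced (fst L)"

definition lt_normalized :: "ltqmdd \<Rightarrow> bool" where
  "lt_normalized L \<longleftrightarrow> normalized (fst L)"

definition ltqmdd_sem :: "nat \<Rightarrow> ltqmdd \<Rightarrow> cmatrix" where
  "ltqmdd_sem n L = lt_mat n (snd L) (qmdd_mat n (fst L))"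

definition ltqmdd_iso :: "ltqmdd \<Rightarrow> ltqmdd \<Rightarrow> bool" where
  "ltqmdd_iso L1 L2 \<longleftrightarrow> snd L1 = snd L2 \<and> qmdd_iso (fst L1) (fst L2)"

end

theory Submission
  imports Defs
begin

text \<open>
  A linear transformation \<open>\<pi>\<close> induces a permutation of the indices, since every variable is a
  XOR of entries of \<open>\<pi>\<close>. Hence the LTQMDDs respecting \<open>\<pi>\<close> with semantics \<open>U\<close> are exactly
  the QMDDs for \<open>U\<close> with the inverse permutation applied, and it suffices to treat QMDDs.

  Uniqueness: by downward induction on the level, in reduced normalized diagrams two edges with
  nonzero weights and the same semantics have equal weights and end in nodes of the same level,
  which coincide if they lie in the same diagram. Relating the nodes of two diagrams for the same
  nonzero matrix by equality of semantics thus gives a bijection, and it is an isomorphism.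

  Existence: the internal nodes are the normal forms of the aligned subblocks of the matrix that
  are neither zero nor constant; the normal form strips the top levels with four equal quadrants
  and divides by the weight of the normalized edge into the block. Discarding the nodes that are
  unreachable from the root yields the diagram.
\<close>

section \<open>The permutation induced by a linear transformation\<close>

lemma bit_sum_pow2_iff:
  fixes f :: "nat \<Rightarrow> bool"
  shows "bit (\<Sum>q<n. if f q then 2 ^ q else 0 :: nat) i \<longleftrightarrow> i < n \<and> f i"
proof (induction n arbitrary: f i)
  case 0
  then show ?case by simp
next
  case (Suc n)
  have split: "(\<Sum>q<Suc n. if f q then 2 ^ q else 0) =
      of_bool (f 0) + 2 * (\<Sum>q<n. if f (Suc q) then 2 ^ q else 0 :: nat)"
    unfolding sum.lessThan_Suc_shift by (auto simp: sum_distrib_left intro!: sum.cong)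
  show ?case
    unfolding split by (cases i) (simp_all add: bit_0 bit_Suc Suc.IH)
qed

lemma sum_pow2_less:
  fixes f :: "nat \<Rightarrow> bool"
  shows "(\<Sum>q<n. if f q then 2 ^ q else 0) < (2::nat) ^ n"
proof (induction n)
  case 0
  then show ?case by simp
next
  case (Suc n)
  have "(\<Sum>q<Suc n. if f q then 2 ^ q else 0) \<le> (\<Sum>q<n. if f q then 2 ^ q else 0) + (2::nat) ^ n"
    by simp
  then show ?case using Suc by simp
qed

lemma var_val_eq_bit: "k < n \<Longrightarrow> var_val n i k \<longleftrightarrow> bit i (n - 1 - k)"
  by (simp add: var_val_def bit_iff_odd)

lemma eq_if_var_val_eq:
  assumes "i < 2 ^ n" "j < 2 ^ n" and "\<And>k. k < n \<Longrightarrow> var_val n i k \<longleftrightarrow> var_val n j k"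
  shows "i = j"
proof -
  have "bit i q \<longleftrightarrow> bit j q" if "q < n" for q
    using assms(3)[of "n - 1 - q"] that by (simp add: var_val_eq_bit)
  then have "take_bit n i = take_bit n j"
    by (auto simp: bit_eq_iff bit_take_bit_iff)
  with assms(1,2) show ?thesis
    by (simp add: take_bit_nat_eq_self)
qed

lemma lt_perm_eq_sum_pow2:
  "lt_perm n \<pi> i = (\<Sum>q<n. if lc_val n (\<pi> ! (n - Suc q)) i then 2 ^ q else 0)"
proof -
  have "lt_perm n \<pi> i = (\<Sum>q<n. (\<lambda>k. if lc_val n (\<pi> ! k) i then 2 ^ (n - 1 - k) else 0) (n - Suc q))"
    unfolding lt_perm_def by (rule sum.nat_diff_reindex[symmetric])
  also have "\<dots> = (\<Sum>q<n. if lc_val n (\<pi> ! (n - Suc q)) i then 2 ^ q else 0)"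
    by (rule sum.cong) auto
  finally show ?thesis .
qed

lemma lt_perm_less: "lt_perm n \<pi> i < 2 ^ n"
  unfolding lt_perm_eq_sum_pow2 by (rule sum_pow2_less)

lemma var_val_lt_perm: "k < n \<Longrightarrow> var_val n (lt_perm n \<pi> i) k \<longleftrightarrow> lc_val n (\<pi> ! k) i"
  by (simp add: var_val_eq_bit lt_perm_eq_sum_pow2 bit_sum_pow2_iff Suc_diff_Suc)

lemma lc_val_singleton: "m < n \<Longrightarrow> lc_val n {m} i \<longleftrightarrow> var_val n i m"
  by (simp add: lc_val_def Collect_conv_if)

lemma lc_val_xor_lc:
  assumes "finite S" and "\<forall>Y\<in>S. Y \<subseteq> {0..<n}"
  shows "lc_val n (xor_lc S) i \<longleftrightarrow> odd (card {Y\<in>S. lc_val n Y i})"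
proof -
  let ?A = "{x. x < n \<and> var_val n i x}"
  let ?deg = "\<lambda>x. card {Y\<in>S. x \<in> Y}"
  have bound: "x < n" if "x \<in> Y" "Y \<in> S" for x Y
    using assms(2) that by force
  have xor_sub: "x < n" if "x \<in> xor_lc S" for x
  proof (rule ccontr)
    assume "\<not> x < n"
    then have "{Y\<in>S. x \<in> Y} = {}"
      using bound by auto
    then show False
      using that unfolding xor_lc_def by (metis (no_types) card.empty even_zero mem_Collect_eq)
  qed
  have "{x\<in>xor_lc S. var_val n i x} = {x\<in>?A. odd (?deg x)}"
    using xor_sub by (auto simp: xor_lc_def)
  then have "odd (card {x\<in>xor_lc S. var_val n i x}) \<longleftrightarrow> odd (\<Sum>x\<in>?A. ?deg x)"
    by (simp add: even_sum_iff)
  also have "(\<Sum>x\<in>?A. ?deg x) = (\<Sum>Y\<in>S. card {x\<in>?A. x \<in> Y})"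
    using sum.swap_restrict[OF _ assms(1), of ?A "\<lambda>_ _. 1 :: nat" "\<lambda>x Y. x \<in> Y"]
    by simp
  also have "\<dots> = (\<Sum>Y\<in>S. card {x\<in>Y. var_val n i x})"
    using bound by (intro sum.cong refl arg_cong[where f = card]) auto
  also have "odd \<dots> \<longleftrightarrow> odd (card {Y\<in>S. lc_val n Y i})"
    using assms(1) by (simp add: even_sum_iff lc_val_def)
  finally show ?thesis
    by (simp add: lc_val_def)
qed

lemma lt_perm_inj:
  assumes lt: "is_lin_trans n \<pi>" and "i < 2 ^ n" "j < 2 ^ n"
    and eq: "lt_perm n \<pi> i = lt_perm n \<pi> j"
  shows "i = j"
proof (rule eq_if_var_val_eq[OF assms(2,3)])
  fix m assume m: "m < n"
  from lt have sub: "\<forall>Y\<in>set \<pi>. Y \<subseteq> {0..<n}"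
    by (simp add: is_lin_trans_def)
  obtain S where S: "S \<subseteq> set \<pi>" "xor_lc S = {m}"
    using lt m by (auto simp: is_lin_trans_def fully_ranked_def)
  have fin: "finite S"
    using S(1) finite_subset by blast
  have "lc_val n Y i \<longleftrightarrow> lc_val n Y j" if "Y \<in> set \<pi>" for Y
  proof -
    from that obtain k where "k < length \<pi>" "\<pi> ! k = Y"
      by (auto simp: in_set_conv_nth)
    then show ?thesis
      using var_val_lt_perm[of k n \<pi>] eq lt by (metis is_lin_trans_def)
  qed
  then have "{Y\<in>S. lc_val n Y i} = {Y\<in>S. lc_val n Y j}"
    using S(1) by auto
  moreover have "\<forall>Y\<in>S. Y \<subseteq> {0..<n}"
    using sub S(1) by blast
  ultimately show "var_val n i m \<longleftrightarrow> var_val n j m"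
    using lc_val_xor_lc[OF fin] S(2) lc_val_singleton[OF m] by metis
qed

lemma lt_perm_bij:
  assumes "is_lin_trans n \<pi>"
  shows "bij_betw (lt_perm n \<pi>) {0..<2^n} {0..<2^n}"
proof -
  have inj: "inj_on (lt_perm n \<pi>) {0..<2^n}"
    using lt_perm_inj[OF assms] by (auto intro: inj_onI)
  moreover have "lt_perm n \<pi> ` {0..<2^n} \<subseteq> {0..<2^n}"
    using lt_perm_less by auto
  ultimately show ?thesis
    by (simp add: bij_betw_def endo_inj_surj)
qed

lemma lt_perm_surj:
  assumes "is_lin_trans n \<pi>" and "r < 2 ^ n"
  obtains i where "i < 2 ^ n" and "lt_perm n \<pi> i = r"
  using bij_betw_imp_surj_on[OF lt_perm_bij[OF assms(1)]] assms(2)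
  by (metis atLeastLessThan_iff imageE zero_le)

lemma mat_eq_lt_mat_iff:
  assumes "is_lin_trans n \<pi>"
  shows "mat_eq (2 ^ n) (lt_mat n \<pi> A) (lt_mat n \<pi> B) \<longleftrightarrow> mat_eq (2 ^ n) A B"
proof
  assume eq: "mat_eq (2 ^ n) (lt_mat n \<pi> A) (lt_mat n \<pi> B)"
  show "mat_eq (2 ^ n) A B"
    unfolding mat_eq_def
  proof (intro allI impI)
    fix r c :: nat
    assume "r < 2 ^ n" "c < 2 ^ n"
    with lt_perm_surj[OF assms] obtain i j where
      "i < 2 ^ n" "j < 2 ^ n" "lt_perm n \<pi> i = r" "lt_perm n \<pi> j = c"
      by metis
    with eq show "A r c = B r c"
      by (auto simp: mat_eq_def lt_mat_def)
  qed
qed (simp add: mat_eq_def lt_mat_def lt_perm_less)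

lemma lt_mat_surj:
  assumes "is_lin_trans n \<pi>"
  obtains A where "mat_eq (2 ^ n) (lt_mat n \<pi> A) U"
proof
  let ?inv = "the_inv_into {0..<2^n} (lt_perm n \<pi>)"
  have "?inv (lt_perm n \<pi> i) = i" if "i < 2 ^ n" for i
    using the_inv_into_f_f[OF bij_betw_imp_inj_on[OF lt_perm_bij[OF assms]]] that by simp
  then show "mat_eq (2 ^ n) (lt_mat n \<pi> (\<lambda>r c. U (?inv r) (?inv c))) U"
    by (simp add: mat_eq_def lt_mat_def)
qed

declare nsem.simps [simp del]

definition edge_index :: "nat \<Rightarrow> nat \<Rightarrow> nat \<Rightarrow> nat \<Rightarrow> nat" where
  "edge_index n p r c = 2 * (if var_val n r p then 1 else 0) + (if var_val n c p then 1 else 0)"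

lemma edge_index_less: "edge_index n p r c < 4"
  by (simp add: edge_index_def)

lemma nsem_beyond: "n \<le> j \<Longrightarrow> nsem n Q v j r c = 1"
  by (simp add: nsem.simps)

lemma nsem_node:
  assumes "v \<in> inodes Q" "ind Q v = j" "j < n"
  shows "nsem n Q v j r c = wt Q v (edge_index n j r c) * nsem n Q (succ Q v (edge_index n j r c)) (Suc j) r c"
  using assms by (subst nsem.simps) (simp add: edge_index_def Let_def)

lemma nsem_pass:
  assumes "\<not> (v \<in> inodes Q \<and> ind Q v = j)"
  shows "nsem n Q v j r c = nsem n Q v (Suc j) r c"
proof -
  have "nsem n Q v j r c = (if n \<le> j then 1 else nsem n Q v (Suc j) r c)"
    using assms by (subst nsem.simps) (simp only: if_False)
  then show ?thesis
    by (simp add: nsem_beyond)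
qed

lemma nsem_terminal: "v \<notin> inodes Q \<Longrightarrow> nsem n Q v j r c = 1"
proof (induction n Q v j r c rule: nsem.induct)
  case (1 n Q v j r c)
  then show ?case by (subst nsem.simps) simp
qed

lemma nind_inode [simp]: "v \<in> inodes Q \<Longrightarrow> nind n Q v = ind Q v"
  by (simp add: nind_def)

lemma nind_terminal [simp]: "v \<notin> inodes Q \<Longrightarrow> nind n Q v = n"
  by (simp add: nind_def)

lemma nsem_skip:
  assumes "j \<le> j'" "j' \<le> nind n Q v"
  shows "nsem n Q v j r c = nsem n Q v j' r c"
  using assms
proof (induction "j' - j" arbitrary: j)
  case 0
  then show ?case by simp
next
  case (Suc d)
  then have "\<not> (v \<in> inodes Q \<and> ind Q v = j)"
    by auto
  then have "nsem n Q v j r c = nsem n Q v (Suc j) r c"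
    by (rule nsem_pass)
  also have "\<dots> = nsem n Q v j' r c"
    using Suc by simp
  finally show ?case .
qed

lemma nsem_node_below:
  assumes "v \<in> inodes Q" "ind Q v = p" "p < n" "j \<le> p"
  shows "nsem n Q v j r c = wt Q v (edge_index n p r c) * nsem n Q (succ Q v (edge_index n p r c)) (Suc p) r c"
  using nsem_skip[of j p n Q v] nsem_node[OF assms(1-3)] assms by simp

lemma var_val_eq_if_mod_eq:
  assumes "r mod 2 ^ (n - j) = r' mod 2 ^ (n - j)" "j \<le> i" "i < n"
  shows "var_val n r i \<longleftrightarrow> var_val n r' i"
proof -
  have "bit (take_bit (n - j) r) (n - 1 - i) \<longleftrightarrow> bit (take_bit (n - j) r') (n - 1 - i)"
    using assms(1) by (simp add: take_bit_eq_mod)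
  moreover have "n - 1 - i < n - j"
    using assms(2,3) by simp
  ultimately show ?thesis
    using assms(3) by (simp add: var_val_eq_bit bit_take_bit_iff)
qed

lemma mod_pow2_mod_pow2: "e' \<le> e \<Longrightarrow> (r::nat) mod 2 ^ e mod 2 ^ e' = r mod 2 ^ e'"
  by (simp add: le_imp_power_dvd mod_mod_cancel)

lemma nsem_mod_eq:
  "r mod 2 ^ (n - j) = r' mod 2 ^ (n - j) \<Longrightarrow> c mod 2 ^ (n - j) = c' mod 2 ^ (n - j) \<Longrightarrow>
   nsem n Q v j r c = nsem n Q v j r' c'"
proof (induction n Q v j r c arbitrary: r' c' rule: nsem.induct)
  case (1 n Q v j r c)
  show ?case
  proof (cases "n \<le> j")
    case True
    then show ?thesis by (simp add: nsem_beyond)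
  next
    case False
    have "n - Suc j \<le> n - j"
      by simp
    then have low: "r mod 2 ^ (n - Suc j) = r' mod 2 ^ (n - Suc j)" "c mod 2 ^ (n - Suc j) = c' mod 2 ^ (n - Suc j)"
      using "1.prems" mod_pow2_mod_pow2 by metis+
    have "var_val n r j \<longleftrightarrow> var_val n r' j" "var_val n c j \<longleftrightarrow> var_val n c' j"
      using var_val_eq_if_mod_eq "1.prems" False by auto
    then have idx: "edge_index n j r c = edge_index n j r' c'"
      by (simp add: edge_index_def)
    show ?thesis
    proof (cases "v \<in> inodes Q \<and> ind Q v = j")
      case True
      with "1.IH"(1)[OF False True refl low] False idx show ?thesis
        by (simp add: nsem_node edge_index_def)
    next
      case outside: False
      with "1.IH"(2)[OF False outside low] show ?thesis
        by (simp add: nsem_pass)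
    qed
  qed
qed

lemma exists_var_val_update:
  assumes "p < n"
  obtains r' :: nat where "r' < 2 ^ n" "var_val n r' p \<longleftrightarrow> b" "r' mod 2 ^ (n - Suc p) = r mod 2 ^ (n - Suc p)"
proof
  let ?q = "n - 1 - p"
  let ?r' = "take_bit n (if b then set_bit ?q r else unset_bit ?q r)"
  show "?r' < 2 ^ n"
    by simp
  show "var_val n ?r' p \<longleftrightarrow> b"
    using assms by (simp add: var_val_eq_bit bit_take_bit_iff bit_set_bit_iff bit_unset_bit_iff)
  show "?r' mod 2 ^ (n - Suc p) = r mod 2 ^ (n - Suc p)"
    unfolding take_bit_eq_mod[symmetric]
    by (cases b) (auto intro!: bit_eqI simp: bit_take_bit_iff bit_set_bit_iff bit_unset_bit_iff)
qed

lemma exists_edge_index: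
  assumes "p < n" "k < 4"
  obtains r' c' where "r' < 2 ^ n" "c' < 2 ^ n" "edge_index n p r' c' = k"
    "r' mod 2 ^ (n - Suc p) = r mod 2 ^ (n - Suc p)" "c' mod 2 ^ (n - Suc p) = c mod 2 ^ (n - Suc p)"
proof -
  obtain r' where r': "r' < 2 ^ n" "var_val n r' p \<longleftrightarrow> 2 \<le> k"
      "r' mod 2 ^ (n - Suc p) = r mod 2 ^ (n - Suc p)"
    using exists_var_val_update[OF assms(1)] by blast
  obtain c' where c': "c' < 2 ^ n" "var_val n c' p \<longleftrightarrow> odd k"
      "c' mod 2 ^ (n - Suc p) = c mod 2 ^ (n - Suc p)"
    using exists_var_val_update[OF assms(1)] by blast
  from assms(2) have "k \<in> {0, 1, 2, 3}"
    by auto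
  then have "edge_index n p r' c' = k"
    using r'(2) c'(2) by (auto simp: edge_index_def)
  with r' c' that show ?thesis
    by blast
qed

lemma exists_edge_selection:
  assumes "p < n" "k < 4"
  obtains r' c' where "r' < 2 ^ n" "c' < 2 ^ n" "edge_index n p r' c' = k"
    "\<And>Q u. nsem n Q u (Suc p) r' c' = nsem n Q u (Suc p) r c"
proof -
  obtain r' c' where "r' < 2 ^ n" "c' < 2 ^ n" "edge_index n p r' c' = k"
    and low: "r' mod 2 ^ (n - Suc p) = r mod 2 ^ (n - Suc p)" "c' mod 2 ^ (n - Suc p) = c mod 2 ^ (n - Suc p)"
    by (rule exists_edge_index[OF assms])
  with nsem_mod_eq[OF low] that show ?thesis
    by blast
qed

section \<open>Rigidity of reduced normalized QMDDs\<close>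

text \<open>Like \<^const>\<open>is_qmdd\<close> but without reachability from the root, which the diagram
  constructed for existence lacks.\<close>
definition wf_qmdd :: "nat \<Rightarrow> qmdd \<Rightarrow> bool" where
  "wf_qmdd n Q \<longleftrightarrow>
     finite (inodes Q) \<and> tnode Q \<notin> inodes Q \<and> root Q \<in> all_nodes Q \<and>
     (\<forall>v \<in> inodes Q. ind Q v < n) \<and>
     (\<forall>v \<in> inodes Q. \<forall>k<4. succ Q v k \<in> all_nodes Q \<and> ind Q v < nind n Q (succ Q v k))"

lemma is_qmdd_iff_wf_qmdd:
  "is_qmdd n Q \<longleftrightarrow> wf_qmdd n Q \<and> (\<forall>v \<in> all_nodes Q. (root Q, v) \<in> (edge_rel Q)\<^sup>*)"
  unfolding is_qmdd_def wf_qmdd_def by blast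

lemma wf_qmdd_ind: "wf_qmdd n Q \<Longrightarrow> v \<in> inodes Q \<Longrightarrow> ind Q v < n"
  by (simp add: wf_qmdd_def)

lemma wf_qmdd_succ:
  assumes "wf_qmdd n Q" "v \<in> inodes Q" "k < 4"
  shows "succ Q v k \<in> all_nodes Q" "ind Q v < nind n Q (succ Q v k)"
  using assms by (simp_all add: wf_qmdd_def)

lemma wf_qmdd_nind_le: "wf_qmdd n Q \<Longrightarrow> nind n Q v \<le> n"
  by (auto simp: nind_def wf_qmdd_def less_imp_le)

lemma wf_qmdd_tnode: "wf_qmdd n Q \<Longrightarrow> tnode Q \<notin> inodes Q"
  by (simp add: wf_qmdd_def)

lemma tnode_in_all_nodes [simp]: "tnode Q \<in> all_nodes Q"
  by (simp add: all_nodes_def)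

lemma inode_in_all_nodes: "v \<in> inodes Q \<Longrightarrow> v \<in> all_nodes Q"
  by (simp add: all_nodes_def)

lemma normalized_one_edge:
  "normalized Q \<Longrightarrow> v \<in> inodes Q \<Longrightarrow> \<exists>k<4. wt Q v k = 1"
  unfolding normalized_def by blast

lemma normalized_zero_edge:
  "normalized Q \<Longrightarrow> v \<in> inodes Q \<Longrightarrow> k < 4 \<Longrightarrow> wt Q v k = 0 \<Longrightarrow> succ Q v k = tnode Q"
  unfolding normalized_def by blast

lemma nsem_nonzero:
  assumes wf: "wf_qmdd n Q" and norm: "normalized Q" and "v \<in> all_nodes Q" "j \<le> nind n Q v"
  shows "\<exists>r c. r < 2 ^ n \<and> c < 2 ^ n \<and> nsem n Q v j r c \<noteq> 0"
  using assms(3,4)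
proof (induction "n - nind n Q v" arbitrary: v j rule: less_induct)
  case less
  show ?case
  proof (cases "v \<in> inodes Q")
    case False
    then show ?thesis
      by (intro exI[of _ 0]) (simp add: nsem_terminal)
  next
    case True
    define p where "p = ind Q v"
    have p: "p < n"
      using wf_qmdd_ind[OF wf True] by (simp add: p_def)
    obtain k where k: "k < 4" "wt Q v k = 1"
      using normalized_one_edge[OF norm True] by blast
    note child = wf_qmdd_succ[OF wf True k(1)]
    have "n - nind n Q (succ Q v k) < n - nind n Q v"
      using child(2) wf_qmdd_nind_le[OF wf, of "succ Q v k"] True by simp
    moreover have "Suc p \<le> nind n Q (succ Q v k)"
      using child(2) by (simp add: p_def)
    ultimately obtain r0 c0 where rc0: "r0 < 2 ^ n" "c0 < 2 ^ n" "nsem n Q (succ Q v k) (Suc p) r0 c0 \<noteq> 0"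
      using less.hyps child(1) by blast
    obtain r c where rc: "r < 2 ^ n" "c < 2 ^ n" "edge_index n p r c = k"
        "nsem n Q (succ Q v k) (Suc p) r c = nsem n Q (succ Q v k) (Suc p) r0 c0"
      using exists_edge_selection[OF p k(1), of r0 c0] by metis
    have "nsem n Q v j r c = nsem n Q (succ Q v k) (Suc p) r0 c0"
      using nsem_node_below[OF True p_def[symmetric] p] less.prems(2) True rc(3,4) k(2)
      by (simp add: p_def)
    then show ?thesis
      using rc(1,2) rc0(3) by (intro exI[of _ r] exI[of _ c]) simp
  qed
qed

text \<open>In the notation of the paper: \<open>M\<^sup>j\<close> of the edge into \<open>u\<close> with weight \<open>a\<close> equals
  \<open>M\<^sup>j\<close> of the edge into \<open>v\<close> with weight \<open>b\<close>.\<close>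
definition scaled_sem_eq :: "nat \<Rightarrow> nat \<Rightarrow> complex \<Rightarrow> qmdd \<Rightarrow> nat \<Rightarrow> complex \<Rightarrow> qmdd \<Rightarrow> nat \<Rightarrow> bool" where
  "scaled_sem_eq n j a Q1 u b Q2 v \<longleftrightarrow>
     (\<forall>r c. r < 2 ^ n \<longrightarrow> c < 2 ^ n \<longrightarrow> a * nsem n Q1 u j r c = b * nsem n Q2 v j r c)"

lemma scaled_sem_eq_sym: "scaled_sem_eq n j a Q1 u b Q2 v \<Longrightarrow> scaled_sem_eq n j b Q2 v a Q1 u"
  unfolding scaled_sem_eq_def by metis

lemma scaled_sem_eq_trans:
  "scaled_sem_eq n j a Q1 u b Q2 v \<Longrightarrow> scaled_sem_eq n j b Q2 v c Q3 w \<Longrightarrow> scaled_sem_eq n j a Q1 u c Q3 w"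
  unfolding scaled_sem_eq_def by metis

lemma scaled_sem_eq_cancel:
  "c \<noteq> 0 \<Longrightarrow> scaled_sem_eq n j (c * a) Q1 u (c * b) Q2 v \<longleftrightarrow> scaled_sem_eq n j a Q1 u b Q2 v"
  by (simp add: scaled_sem_eq_def mult.assoc)

lemma scaled_sem_eq_skip:
  assumes "j \<le> j'" "j' \<le> nind n Q1 u" "j' \<le> nind n Q2 v"
  shows "scaled_sem_eq n j a Q1 u b Q2 v \<longleftrightarrow> scaled_sem_eq n j' a Q1 u b Q2 v"
  using nsem_skip[of j j' n Q1 u] nsem_skip[of j j' n Q2 v] assms
  by (simp add: scaled_sem_eq_def)

lemma scaled_sem_eq_child:
  assumes "u \<in> inodes Q1" "ind Q1 u = p" "p < n" "j \<le> p" "k < 4"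
    and "p < nind n Q2 v" and eq: "scaled_sem_eq n j a Q1 u b Q2 v"
  shows "scaled_sem_eq n (Suc p) (a * wt Q1 u k) Q1 (succ Q1 u k) b Q2 v"
  unfolding scaled_sem_eq_def
proof (intro allI impI)
  fix r c :: nat
  obtain r' c' where rc: "r' < 2 ^ n" "c' < 2 ^ n" "edge_index n p r' c' = k"
      "\<And>Q u. nsem n Q u (Suc p) r' c' = nsem n Q u (Suc p) r c"
    using exists_edge_selection[OF assms(3,5)] by metis
  have "a * wt Q1 u k * nsem n Q1 (succ Q1 u k) (Suc p) r c = a * nsem n Q1 u j r' c'"
    using nsem_node_below[OF assms(1-4)] rc(3,4) by simp
  also have "\<dots> = b * nsem n Q2 v j r' c'"
    using eq rc(1,2) by (simp add: scaled_sem_eq_def)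
  also have "\<dots> = b * nsem n Q2 v (Suc p) r c"
    using nsem_skip[of j "Suc p" n Q2 v] assms(4,6) rc(4) by simp
  finally show "a * wt Q1 u k * nsem n Q1 (succ Q1 u k) (Suc p) r c = b * nsem n Q2 v (Suc p) r c" .
qed

lemma scaled_sem_eq_children:
  assumes "u \<in> inodes Q1" "ind Q1 u = p" "v \<in> inodes Q2" "ind Q2 v = p" "p < n" "j \<le> p" "k < 4"
    and eq: "scaled_sem_eq n j a Q1 u b Q2 v"
  shows "scaled_sem_eq n (Suc p) (a * wt Q1 u k) Q1 (succ Q1 u k) (b * wt Q2 v k) Q2 (succ Q2 v k)"
  unfolding scaled_sem_eq_def
proof (intro allI impI)
  fix r c :: nat
  obtain r' c' where rc: "r' < 2 ^ n" "c' < 2 ^ n" "edge_index n p r' c' = k"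
      "\<And>Q u. nsem n Q u (Suc p) r' c' = nsem n Q u (Suc p) r c"
    using exists_edge_selection[OF assms(5,7)] by metis
  have "a * wt Q1 u k * nsem n Q1 (succ Q1 u k) (Suc p) r c = a * nsem n Q1 u j r' c'"
    using nsem_node_below[OF assms(1,2,5,6)] rc(3,4) by simp
  also have "\<dots> = b * nsem n Q2 v j r' c'"
    using eq rc(1,2) by (simp add: scaled_sem_eq_def)
  also have "\<dots> = b * wt Q2 v k * nsem n Q2 (succ Q2 v k) (Suc p) r c"
    using nsem_node_below[OF assms(3,4,5,6)] rc(3,4) by simp
  finally show "a * wt Q1 u k * nsem n Q1 (succ Q1 u k) (Suc p) r c =
      b * wt Q2 v k * nsem n Q2 (succ Q2 v k) (Suc p) r c" .
qed

definition canonical_qmdd :: "nat \<Rightarrow> qmdd \<Rightarrow> bool" where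
  "canonical_qmdd n Q \<longleftrightarrow> wf_qmdd n Q \<and> reduced Q \<and> normalized Q"

lemma scaled_sem_eq_zero_iff:
  assumes "canonical_qmdd n Q1" "canonical_qmdd n Q2" "u \<in> all_nodes Q1" "v \<in> all_nodes Q2"
    "j \<le> nind n Q1 u" "j \<le> nind n Q2 v" and eq: "scaled_sem_eq n j a Q1 u b Q2 v"
  shows "a = 0 \<longleftrightarrow> b = 0"
proof -
  have zero: "b = 0" if "a = 0" "canonical_qmdd n Q2" "v \<in> all_nodes Q2" "j \<le> nind n Q2 v"
    "scaled_sem_eq n j a Q1 u b Q2 v" for a b Q1 Q2 u v
  proof -
    from nsem_nonzero[of n Q2 v j] that(2-4) obtain r c where
      "r < 2 ^ n" "c < 2 ^ n" "nsem n Q2 v j r c \<noteq> 0"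
      by (auto simp: canonical_qmdd_def)
    with that(1,5) show "b = 0"
      by (auto simp: scaled_sem_eq_def)
  qed
  show ?thesis
    using zero[OF _ assms(2,4,6) eq] zero[OF _ assms(1,3,5) scaled_sem_eq_sym[OF eq]] by blast
qed

lemma normalized_weights_scale_eq:
  assumes "normalized Q1" "u \<in> inodes Q1" "normalized Q2" "v \<in> inodes Q2"
    and scale: "\<And>k. k < 4 \<Longrightarrow> a * wt Q1 u k = b * wt Q2 v k" and "a \<noteq> 0"
  shows "a = b"
proof -
  let ?x = "wt Q1 u" and ?y = "wt Q2 v"
  obtain k1 where k1: "k1 < 4" "?x k1 = 1" "\<forall>k'<k1. cmod (?x k') \<noteq> 1" "\<forall>k<4. cmod (?x k) \<le> 1"
    using assms(1,2) unfolding normalized_def by blast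
  obtain k2 where k2: "k2 < 4" "?y k2 = 1" "\<forall>k'<k2. cmod (?y k') \<noteq> 1" "\<forall>k<4. cmod (?y k) \<le> 1"
    using assms(3,4) unfolding normalized_def by blast
  have norms: "cmod a * cmod (?x k) = cmod b * cmod (?y k)" if "k < 4" for k
    using scale[OF that] by (metis norm_mult)
  have "cmod a \<le> cmod b"
    using norms[OF k1(1)] k1(2) k2(4) k1(1) by (metis mult.right_neutral mult_left_le norm_ge_zero norm_one)
  moreover have "cmod b \<le> cmod a"
    using norms[OF k2(1)] k2(2) k1(4) k2(1) by (metis mult.right_neutral mult_left_le norm_ge_zero norm_one)
  ultimately have "cmod a = cmod b"
    by simp
  moreover from this \<open>a \<noteq> 0\<close> have "b \<noteq> 0"
    by auto
  ultimately have same_norms: "cmod (?x k) = cmod (?y k)" if "k < 4" for k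
    using norms[OF that] by simp
  have "k1 = k2"
  proof (rule ccontr)
    assume "k1 \<noteq> k2"
    then consider "k1 < k2" | "k2 < k1"
      by linarith
    then show False
      by cases (use k1 k2 same_norms[of k1] same_norms[of k2] in auto)
  qed
  then show ?thesis
    using scale[OF k1(1)] k1(2) k2(2) by simp
qed

text \<open>The invariant of the downward induction on the level \<open>j\<close>.\<close>
definition scaled_sem_rigid :: "nat \<Rightarrow> nat \<Rightarrow> bool" where
  "scaled_sem_rigid n j \<longleftrightarrow> (\<forall>Q1 Q2 u v a b.
     canonical_qmdd n Q1 \<and> canonical_qmdd n Q2 \<and> u \<in> all_nodes Q1 \<and> v \<in> all_nodes Q2 \<and>
     j \<le> nind n Q1 u \<and> j \<le> nind n Q2 v \<and> a \<noteq> 0 \<and> b \<noteq> 0 \<and> scaled_sem_eq n j a Q1 u b Q2 v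
     \<longrightarrow> a = b \<and> nind n Q1 u = nind n Q2 v \<and> (Q1 = Q2 \<longrightarrow> u = v))"

lemma scaled_sem_rigidD:
  assumes "scaled_sem_rigid n j" "canonical_qmdd n Q1" "canonical_qmdd n Q2"
    "u \<in> all_nodes Q1" "v \<in> all_nodes Q2" "j \<le> nind n Q1 u" "j \<le> nind n Q2 v" "a \<noteq> 0" "b \<noteq> 0"
    "scaled_sem_eq n j a Q1 u b Q2 v"
  shows "a = b" "nind n Q1 u = nind n Q2 v" "Q1 = Q2 \<Longrightarrow> u = v"
  using assms unfolding scaled_sem_rigid_def by blast+

text \<open>If a node had the scaled semantics of a node strictly below its level, all its children
  would coincide, contradicting reducedness.\<close>
lemma scaled_sem_eq_deeper_False:
  assumes IH: "scaled_sem_rigid n (Suc p)" and C1: "canonical_qmdd n Q1" and C2: "canonical_qmdd n Q2"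
    and u: "u \<in> inodes Q1" "ind Q1 u = p" and v: "v \<in> all_nodes Q2" "p < nind n Q2 v"
    and "j \<le> p" "a \<noteq> 0" "b \<noteq> 0" and eq: "scaled_sem_eq n j a Q1 u b Q2 v"
  shows False
proof -
  have wf1: "wf_qmdd n Q1"
    using C1 by (simp add: canonical_qmdd_def)
  have p: "p < n"
    using wf_qmdd_ind[OF wf1 u(1)] u(2) by simp
  have v_level: "Suc p \<le> nind n Q2 v"
    using v(2) by simp
  have child: "succ Q1 u k \<in> all_nodes Q1" "Suc p \<le> nind n Q1 (succ Q1 u k)" if "k < 4" for k
    using wf_qmdd_succ[OF wf1 u(1) that] u(2) by simp_all
  have child_eq: "scaled_sem_eq n (Suc p) (a * wt Q1 u k) Q1 (succ Q1 u k) b Q2 v" if "k < 4" for k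
    by (rule scaled_sem_eq_child[OF u p \<open>j \<le> p\<close> that v(2) eq])
  have weight: "a * wt Q1 u k \<noteq> 0" if "k < 4" for k
    using scaled_sem_eq_zero_iff[OF C1 C2 child(1)[OF that] v(1) child(2)[OF that] v_level child_eq[OF that]]
      \<open>b \<noteq> 0\<close> by blast
  have same_child: "succ Q1 u k = succ Q1 u 0 \<and> wt Q1 u k = wt Q1 u 0" if "k < 4" for k
  proof -
    have "scaled_sem_eq n (Suc p) (a * wt Q1 u k) Q1 (succ Q1 u k) (a * wt Q1 u 0) Q1 (succ Q1 u 0)"
      using scaled_sem_eq_trans[OF child_eq[OF that] scaled_sem_eq_sym[OF child_eq]] by simp
    note rigid = scaled_sem_rigidD[OF IH C1 C1 child(1)[OF that] child(1) child(2)[OF that] child(2)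
        weight[OF that] weight this]
    from rigid(1) \<open>a \<noteq> 0\<close> have "wt Q1 u k = wt Q1 u 0"
      by simp
    with rigid(3) show ?thesis
      by simp
  qed
  have "reduced Q1"
    using C1 by (simp add: canonical_qmdd_def)
  with u(1) same_child show False
    unfolding reduced_def by blast
qed

lemma scaled_sem_eq_same_level_edges:
  assumes IH: "scaled_sem_rigid n (Suc p)" and C1: "canonical_qmdd n Q1" and C2: "canonical_qmdd n Q2"
    and u: "u \<in> inodes Q1" "ind Q1 u = p" and v: "v \<in> inodes Q2" "ind Q2 v = p"
    and "j \<le> p" "a \<noteq> 0" "b \<noteq> 0" and eq: "scaled_sem_eq n j a Q1 u b Q2 v" and k: "k < 4"
  shows "a * wt Q1 u k = b * wt Q2 v k" and "Q1 = Q2 \<Longrightarrow> succ Q1 u k = succ Q2 v k"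
proof -
  have wf1: "wf_qmdd n Q1" and wf2: "wf_qmdd n Q2" and N1: "normalized Q1" and N2: "normalized Q2"
    using C1 C2 by (simp_all add: canonical_qmdd_def)
  have p: "p < n"
    using wf_qmdd_ind[OF wf1 u(1)] u(2) by simp
  have child1: "succ Q1 u k \<in> all_nodes Q1" "Suc p \<le> nind n Q1 (succ Q1 u k)"
    and child2: "succ Q2 v k \<in> all_nodes Q2" "Suc p \<le> nind n Q2 (succ Q2 v k)"
    using wf_qmdd_succ[OF wf1 u(1) k] wf_qmdd_succ[OF wf2 v(1) k] u(2) v(2) by simp_all
  have child_eq: "scaled_sem_eq n (Suc p) (a * wt Q1 u k) Q1 (succ Q1 u k) (b * wt Q2 v k) Q2 (succ Q2 v k)"
    by (rule scaled_sem_eq_children[OF u v p \<open>j \<le> p\<close> k eq])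
  have zero_iff: "wt Q1 u k = 0 \<longleftrightarrow> wt Q2 v k = 0"
    using scaled_sem_eq_zero_iff[OF C1 C2 child1(1) child2(1) child1(2) child2(2) child_eq]
      \<open>a \<noteq> 0\<close> \<open>b \<noteq> 0\<close> by simp
  have "a * wt Q1 u k = b * wt Q2 v k \<and> (Q1 = Q2 \<longrightarrow> succ Q1 u k = succ Q2 v k)"
  proof (cases "wt Q1 u k = 0")
    case True
    then show ?thesis
      using zero_iff normalized_zero_edge[OF N1 u(1) k] normalized_zero_edge[OF N2 v(1) k] by auto
  next
    case False
    with zero_iff \<open>a \<noteq> 0\<close> \<open>b \<noteq> 0\<close> have "a * wt Q1 u k \<noteq> 0" "b * wt Q2 v k \<noteq> 0"
      by simp_all
    from scaled_sem_rigidD[OF IH C1 C2 child1(1) child2(1) child1(2) child2(2) this child_eq]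
    show ?thesis
      by simp
  qed
  then show "a * wt Q1 u k = b * wt Q2 v k" "Q1 = Q2 \<Longrightarrow> succ Q1 u k = succ Q2 v k"
    by simp_all
qed

lemma scaled_sem_eq_same_level:
  assumes IH: "scaled_sem_rigid n (Suc p)" and C1: "canonical_qmdd n Q1" and C2: "canonical_qmdd n Q2"
    and u: "u \<in> inodes Q1" "ind Q1 u = p" and v: "v \<in> inodes Q2" "ind Q2 v = p"
    and "j \<le> p" "a \<noteq> 0" "b \<noteq> 0" and eq: "scaled_sem_eq n j a Q1 u b Q2 v"
  shows "a = b" and "Q1 = Q2 \<Longrightarrow> u = v"
proof -
  note edges = scaled_sem_eq_same_level_edges[OF IH C1 C2 u v \<open>j \<le> p\<close> \<open>a \<noteq> 0\<close> \<open>b \<noteq> 0\<close> eq]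
  have N1: "normalized Q1" and N2: "normalized Q2"
    using C1 C2 by (simp_all add: canonical_qmdd_def)
  show "a = b"
    using normalized_weights_scale_eq[OF N1 u(1) N2 v(1) edges(1) \<open>a \<noteq> 0\<close>] .
  show "u = v" if "Q1 = Q2"
  proof -
    have "iso_nodes Q1 u v"
      using that edges u(2) v(2) \<open>a = b\<close> \<open>a \<noteq> 0\<close> by (simp add: iso_nodes_def)
    with that C1 u(1) v(1) show "u = v"
      by (auto simp: canonical_qmdd_def reduced_def)
  qed
qed

lemma scaled_sem_eq_lower_level_False:
  assumes IH: "\<And>j'. j < j' \<Longrightarrow> j' \<le> n \<Longrightarrow> scaled_sem_rigid n j'"
    and C1: "canonical_qmdd n Q1" and C2: "canonical_qmdd n Q2" and v: "v \<in> all_nodes Q2"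
    and "j \<le> nind n Q1 u" "a \<noteq> 0" "b \<noteq> 0" and eq: "scaled_sem_eq n j a Q1 u b Q2 v"
    and lower: "nind n Q1 u < nind n Q2 v"
  shows False
proof -
  have wf1: "wf_qmdd n Q1" and wf2: "wf_qmdd n Q2"
    using C1 C2 by (simp_all add: canonical_qmdd_def)
  have u: "u \<in> inodes Q1"
    using lower wf_qmdd_nind_le[OF wf2, of v] by (cases "u \<in> inodes Q1") auto
  then have "scaled_sem_rigid n (Suc (ind Q1 u))"
    using IH \<open>j \<le> nind n Q1 u\<close> wf_qmdd_ind[OF wf1 u] by simp
  from scaled_sem_eq_deeper_False[OF this C1 C2 u refl v _ _ \<open>a \<noteq> 0\<close> \<open>b \<noteq> 0\<close> eq]
  show False
    using lower \<open>j \<le> nind n Q1 u\<close> u by simp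
qed

lemma scaled_sem_eq_equal_level:
  assumes IH: "\<And>j'. j < j' \<Longrightarrow> j' \<le> n \<Longrightarrow> scaled_sem_rigid n j'"
    and C1: "canonical_qmdd n Q1" and C2: "canonical_qmdd n Q2"
    and u: "u \<in> all_nodes Q1" and v: "v \<in> all_nodes Q2"
    and "j \<le> nind n Q1 u" "a \<noteq> 0" "b \<noteq> 0" and eq: "scaled_sem_eq n j a Q1 u b Q2 v"
    and level: "nind n Q1 u = nind n Q2 v"
  shows "a = b \<and> (Q1 = Q2 \<longrightarrow> u = v)"
proof (cases "u \<in> inodes Q1")
  case True
  have wf1: "wf_qmdd n Q1"
    using C1 by (simp add: canonical_qmdd_def)
  have v_in: "v \<in> inodes Q2"
    using level True wf_qmdd_ind[OF wf1 True] by (cases "v \<in> inodes Q2") auto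
  have "scaled_sem_rigid n (Suc (ind Q1 u))"
    using IH \<open>j \<le> nind n Q1 u\<close> True wf_qmdd_ind[OF wf1 True] by simp
  moreover have "ind Q2 v = ind Q1 u" "j \<le> ind Q1 u"
    using level True v_in \<open>j \<le> nind n Q1 u\<close> by simp_all
  ultimately show ?thesis
    using scaled_sem_eq_same_level[OF _ C1 C2 True refl v_in _ _ \<open>a \<noteq> 0\<close> \<open>b \<noteq> 0\<close> eq] by blast
next
  case False
  have "v \<notin> inodes Q2"
    using level False wf_qmdd_ind C2 by (force simp: canonical_qmdd_def)
  have "a * nsem n Q1 u j 0 0 = b * nsem n Q2 v j 0 0"
    using eq by (simp add: scaled_sem_eq_def)
  then have "a = b"
    using False \<open>v \<notin> inodes Q2\<close> by (simp add: nsem_terminal)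
  moreover have "Q1 = Q2 \<longrightarrow> u = v"
    using u v False \<open>v \<notin> inodes Q2\<close> by (simp add: all_nodes_def)
  ultimately show ?thesis
    by simp
qed

lemma scaled_sem_rigid_step:
  assumes IH: "\<And>j'. j < j' \<Longrightarrow> j' \<le> n \<Longrightarrow> scaled_sem_rigid n j'"
  shows "scaled_sem_rigid n j"
  unfolding scaled_sem_rigid_def
proof (intro allI impI, elim conjE)
  fix Q1 Q2 u v a b
  assume C1: "canonical_qmdd n Q1" and C2: "canonical_qmdd n Q2"
    and u: "u \<in> all_nodes Q1" and v: "v \<in> all_nodes Q2"
    and ju: "j \<le> nind n Q1 u" and jv: "j \<le> nind n Q2 v" and a: "a \<noteq> 0" and b: "b \<noteq> 0"
    and eq: "scaled_sem_eq n j a Q1 u b Q2 v"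
  consider "nind n Q1 u < nind n Q2 v" | "nind n Q2 v < nind n Q1 u" | "nind n Q1 u = nind n Q2 v"
    by linarith
  then show "a = b \<and> nind n Q1 u = nind n Q2 v \<and> (Q1 = Q2 \<longrightarrow> u = v)"
  proof cases
    case 1
    then show ?thesis
      using scaled_sem_eq_lower_level_False[OF IH C1 C2 v ju a b eq] by blast
  next
    case 2
    then show ?thesis
      using scaled_sem_eq_lower_level_False[OF IH C2 C1 u jv b a scaled_sem_eq_sym[OF eq]] by blast
  next
    case 3
    then show ?thesis
      using scaled_sem_eq_equal_level[OF IH C1 C2 u v ju a b eq] by blast
  qed
qed

lemma scaled_sem_rigid: "scaled_sem_rigid n j"
proof (induction "n - j" arbitrary: j rule: less_induct)
  case less
  show ?case
    by (rule scaled_sem_rigid_step) (use less in auto)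
qed

section \<open>Uniqueness up to isomorphism\<close>

definition corresponding :: "nat \<Rightarrow> qmdd \<Rightarrow> qmdd \<Rightarrow> nat \<Rightarrow> nat \<Rightarrow> bool" where
  "corresponding n Q1 Q2 u v \<longleftrightarrow> u \<in> all_nodes Q1 \<and> v \<in> all_nodes Q2 \<and>
     nind n Q1 u = nind n Q2 v \<and> scaled_sem_eq n (nind n Q1 u) 1 Q1 u 1 Q2 v"

lemma corresponding_sym: "corresponding n Q1 Q2 u v \<Longrightarrow> corresponding n Q2 Q1 v u"
  unfolding corresponding_def using scaled_sem_eq_sym by metis

lemma corresponding_unique:
  assumes "canonical_qmdd n Q2" "corresponding n Q1 Q2 u v" "corresponding n Q1 Q2 u v'"
  shows "v = v'"
proof -
  have "scaled_sem_eq n (nind n Q2 v) 1 Q2 v 1 Q2 v'"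
    using assms(2,3) scaled_sem_eq_trans[OF scaled_sem_eq_sym] by (metis corresponding_def)
  with assms show ?thesis
    using scaled_sem_rigidD(3)[OF scaled_sem_rigid assms(1) assms(1)] by (metis corresponding_def order_refl one_neq_zero)
qed

lemma corresponding_tnode:
  "wf_qmdd n Q1 \<Longrightarrow> wf_qmdd n Q2 \<Longrightarrow> corresponding n Q1 Q2 (tnode Q1) (tnode Q2)"
  by (simp add: corresponding_def wf_qmdd_def scaled_sem_eq_def nsem_terminal)

lemma corresponding_if_scaled_sem_eq:
  assumes C1: "canonical_qmdd n Q1" and C2: "canonical_qmdd n Q2" and "u \<in> all_nodes Q1" "v \<in> all_nodes Q2"
    and "j \<le> nind n Q1 u" "j \<le> nind n Q2 v" "w \<noteq> 0" and eq: "scaled_sem_eq n j w Q1 u w Q2 v"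
  shows "corresponding n Q1 Q2 u v"
proof -
  have level: "nind n Q1 u = nind n Q2 v"
    using scaled_sem_rigidD(2)[OF scaled_sem_rigid C1 C2 assms(3-7) assms(7) eq] .
  from eq have "scaled_sem_eq n j 1 Q1 u 1 Q2 v"
    using scaled_sem_eq_cancel[OF \<open>w \<noteq> 0\<close>, of n j 1 Q1 u 1 Q2 v] by simp
  then have "scaled_sem_eq n (nind n Q1 u) 1 Q1 u 1 Q2 v"
    using scaled_sem_eq_skip[OF \<open>j \<le> nind n Q1 u\<close> order_refl] level by simp
  with assms(3,4) level show ?thesis
    by (simp add: corresponding_def)
qed

lemma corresponding_inode:
  assumes "wf_qmdd n Q1" "corresponding n Q1 Q2 u v" "u \<in> inodes Q1"
  shows "v \<in> inodes Q2" "ind Q2 v = ind Q1 u" "scaled_sem_eq n (ind Q1 u) 1 Q1 u 1 Q2 v"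
proof -
  from assms(2) have level: "nind n Q1 u = nind n Q2 v" and eq: "scaled_sem_eq n (nind n Q1 u) 1 Q1 u 1 Q2 v"
    unfolding corresponding_def by blast+
  show "scaled_sem_eq n (ind Q1 u) 1 Q1 u 1 Q2 v"
    using eq assms(3) by simp
  show v: "v \<in> inodes Q2"
    using level assms(3) wf_qmdd_ind[OF assms(1,3)] by (cases "v \<in> inodes Q2") auto
  show "ind Q2 v = ind Q1 u"
    using level assms(3) v by simp
qed

lemma corresponding_succ:
  assumes C1: "canonical_qmdd n Q1" and C2: "canonical_qmdd n Q2" and corr: "corresponding n Q1 Q2 u v"
    and u: "u \<in> inodes Q1" and k: "k < 4"
  shows "v \<in> inodes Q2" "ind Q2 v = ind Q1 u" "wt Q2 v k = wt Q1 u k"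
    "corresponding n Q1 Q2 (succ Q1 u k) (succ Q2 v k)"
proof -
  have wf1: "wf_qmdd n Q1" and wf2: "wf_qmdd n Q2" and N1: "normalized Q1" and N2: "normalized Q2"
    using C1 C2 by (simp_all add: canonical_qmdd_def)
  define p where "p = ind Q1 u"
  have p: "p < n"
    using wf_qmdd_ind[OF wf1 u] by (simp add: p_def)
  show v: "v \<in> inodes Q2" and "ind Q2 v = ind Q1 u"
    using corresponding_inode[OF wf1 corr u] by simp_all
  then have v_level: "ind Q2 v = p"
    by (simp add: p_def)
  have eq: "scaled_sem_eq n p 1 Q1 u 1 Q2 v"
    using corresponding_inode(3)[OF wf1 corr u] by (simp add: p_def)
  have weight: "wt Q1 u k = wt Q2 v k"
    using scaled_sem_eq_same_level_edges(1)[OF scaled_sem_rigid C1 C2 u p_def[symmetric] v v_level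
        order_refl _ _ eq k] by simp
  then show "wt Q2 v k = wt Q1 u k"
    by simp
  show "corresponding n Q1 Q2 (succ Q1 u k) (succ Q2 v k)"
  proof (cases "wt Q1 u k = 0")
    case True
    then show ?thesis
      using normalized_zero_edge[OF N1 u k] normalized_zero_edge[OF N2 v k] weight
        corresponding_tnode[OF wf1 wf2] by simp
  next
    case False
    have "succ Q1 u k \<in> all_nodes Q1" "Suc p \<le> nind n Q1 (succ Q1 u k)"
      "succ Q2 v k \<in> all_nodes Q2" "Suc p \<le> nind n Q2 (succ Q2 v k)"
      using wf_qmdd_succ[OF wf1 u k] wf_qmdd_succ[OF wf2 v k] v_level by (simp_all add: p_def)
    moreover have "scaled_sem_eq n (Suc p) (wt Q1 u k) Q1 (succ Q1 u k) (wt Q1 u k) Q2 (succ Q2 v k)"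
      using scaled_sem_eq_children[OF u p_def[symmetric] v v_level p order_refl k eq] weight by simp
    ultimately show ?thesis
      using corresponding_if_scaled_sem_eq[OF C1 C2] False by blast
  qed
qed

lemma corresponding_root:
  assumes C1: "canonical_qmdd n Q1" and C2: "canonical_qmdd n Q2"
    and "root_wt Q1 \<noteq> 0" "root_wt Q2 \<noteq> 0" and eq: "mat_eq (2 ^ n) (qmdd_mat n Q1) (qmdd_mat n Q2)"
  shows "corresponding n Q1 Q2 (root Q1) (root Q2)" and "root_wt Q1 = root_wt Q2"
proof -
  have roots: "root Q1 \<in> all_nodes Q1" "root Q2 \<in> all_nodes Q2"
    using C1 C2 by (simp_all add: canonical_qmdd_def wf_qmdd_def)
  have sem: "scaled_sem_eq n 0 (root_wt Q1) Q1 (root Q1) (root_wt Q2) Q2 (root Q2)"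
    using eq by (simp add: mat_eq_def qmdd_mat_def scaled_sem_eq_def)
  show "root_wt Q1 = root_wt Q2"
    using scaled_sem_rigidD(1)[OF scaled_sem_rigid C1 C2 roots _ _ assms(3,4) sem] by simp
  with sem show "corresponding n Q1 Q2 (root Q1) (root Q2)"
    using corresponding_if_scaled_sem_eq[OF C1 C2 roots le0 le0 assms(3)] by simp
qed

lemma corresponding_reachable:
  assumes "canonical_qmdd n Q1" "canonical_qmdd n Q2" "corresponding n Q1 Q2 (root Q1) (root Q2)"
    and "(root Q1, u) \<in> (edge_rel Q1)\<^sup>*"
  shows "\<exists>v. corresponding n Q1 Q2 u v"
  using assms(4)
proof (induction rule: rtrancl_induct)
  case base
  then show ?case
    using assms(3) by blast
next
  case (step u' u)
  then obtain v where "corresponding n Q1 Q2 u' v"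
    by blast
  moreover from step(2) obtain k where "u' \<in> inodes Q1" "k < 4" "u = succ Q1 u' k"
    unfolding edge_rel_def by blast
  ultimately show ?case
    using corresponding_succ(4)[OF assms(1,2)] by blast
qed

lemma bij_betw_from_relation:
  assumes total: "\<And>x. x \<in> A \<Longrightarrow> \<exists>y. R x y" and surj: "\<And>y. y \<in> B \<Longrightarrow> \<exists>x. R x y"
    and dom: "\<And>x y. R x y \<Longrightarrow> x \<in> A \<and> y \<in> B"
    and unique: "\<And>x y y'. R x y \<Longrightarrow> R x y' \<Longrightarrow> y = y'"
    and inj: "\<And>x x' y. R x y \<Longrightarrow> R x' y \<Longrightarrow> x = x'"
  obtains f where "bij_betw f A B" "\<And>x y. R x y \<Longrightarrow> f x = y"
proof
  define f where "f x = (SOME y. R x y)" for x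
  show f_eq: "f x = y" if "R x y" for x y
    using someI[of "R x", OF that] unique that by (simp add: f_def)
  have R_f: "R x (f x)" if "x \<in> A" for x
    using total[OF that] f_eq by blast
  show "bij_betw f A B"
    unfolding bij_betw_def
  proof
    show "inj_on f A"
      using R_f inj by (metis inj_onI)
    show "f ` A = B"
    proof
      show "f ` A \<subseteq> B"
        using R_f dom by blast
      show "B \<subseteq> f ` A"
      proof
        fix y
        assume "y \<in> B"
        then obtain x where "R x y"
          using surj by blast
        then show "y \<in> f ` A"
          using dom f_eq by (metis image_eqI)
      qed
    qed
  qed
qed

lemma corresponding_bij:
  assumes "is_qmdd n Q1" "is_qmdd n Q2" and C1: "canonical_qmdd n Q1" and C2: "canonical_qmdd n Q2"
    and root: "corresponding n Q1 Q2 (root Q1) (root Q2)"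
  obtains f where "bij_betw f (all_nodes Q1) (all_nodes Q2)"
    "\<And>u. u \<in> all_nodes Q1 \<Longrightarrow> corresponding n Q1 Q2 u (f u)"
    "\<And>u v. corresponding n Q1 Q2 u v \<Longrightarrow> f u = v"
proof -
  have total: "\<exists>v. corresponding n Q1 Q2 u v" if "u \<in> all_nodes Q1" for u
    using corresponding_reachable[OF C1 C2 root] assms(1) that by (simp add: is_qmdd_def)
  obtain f where f: "bij_betw f (all_nodes Q1) (all_nodes Q2)"
      and f_eq: "\<And>u v. corresponding n Q1 Q2 u v \<Longrightarrow> f u = v"
  proof (rule bij_betw_from_relation[where R = "corresponding n Q1 Q2"])
    show "\<exists>v. corresponding n Q1 Q2 u v" if "u \<in> all_nodes Q1" for u
      using total[OF that] .
    show "\<exists>u. corresponding n Q1 Q2 u v" if "v \<in> all_nodes Q2" for v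
      using corresponding_reachable[OF C2 C1 corresponding_sym[OF root]] assms(2) that corresponding_sym
      by (metis is_qmdd_def)
    show "u \<in> all_nodes Q1 \<and> v \<in> all_nodes Q2" if "corresponding n Q1 Q2 u v" for u v
      using that by (simp add: corresponding_def)
    show "v = v'" if "corresponding n Q1 Q2 u v" "corresponding n Q1 Q2 u v'" for u v v'
      using corresponding_unique[OF C2 that] .
    show "u = u'" if "corresponding n Q1 Q2 u v" "corresponding n Q1 Q2 u' v" for u u' v
      using corresponding_unique[OF C1 corresponding_sym[OF that(1)] corresponding_sym[OF that(2)]] .
  qed (rule that)
  moreover have "corresponding n Q1 Q2 u (f u)" if "u \<in> all_nodes Q1" for u
    using total[OF that] f_eq by blast
  ultimately show ?thesis
    using that by blast
qed

lemma image_inodes_eq: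
  assumes "bij_betw f (all_nodes Q1) (all_nodes Q2)" "f (tnode Q1) = tnode Q2"
    and "tnode Q1 \<notin> inodes Q1" "tnode Q2 \<notin> inodes Q2"
  shows "f ` inodes Q1 = inodes Q2"
proof -
  have inodes_eq: "inodes Q = all_nodes Q - {tnode Q}" if "tnode Q \<notin> inodes Q" for Q :: qmdd
    using that by (auto simp: all_nodes_def)
  have "f ` (all_nodes Q1 - {tnode Q1}) = f ` all_nodes Q1 - f ` {tnode Q1}"
    using assms(1) by (intro inj_on_image_set_diff) (auto simp: bij_betw_def)
  then show ?thesis
    using assms by (simp add: inodes_eq bij_betw_def)
qed

lemma qmdd_iso_if_mat_eq:
  assumes Q1: "is_qmdd n Q1" "reduced Q1" "normalized Q1" and Q2: "is_qmdd n Q2" "reduced Q2" "normalized Q2"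
    and "root_wt Q1 \<noteq> 0" "root_wt Q2 \<noteq> 0" and eq: "mat_eq (2 ^ n) (qmdd_mat n Q1) (qmdd_mat n Q2)"
  shows "qmdd_iso Q1 Q2"
proof -
  have C1: "canonical_qmdd n Q1" and C2: "canonical_qmdd n Q2"
    using Q1 Q2 by (simp_all add: canonical_qmdd_def is_qmdd_iff_wf_qmdd)
  have wf1: "wf_qmdd n Q1" and wf2: "wf_qmdd n Q2"
    using C1 C2 by (simp_all add: canonical_qmdd_def)
  note root = corresponding_root[OF C1 C2 assms(7-9)]
  obtain f where f: "bij_betw f (all_nodes Q1) (all_nodes Q2)"
    and corr: "\<And>u. u \<in> all_nodes Q1 \<Longrightarrow> corresponding n Q1 Q2 u (f u)"
    and f_eq: "\<And>u v. corresponding n Q1 Q2 u v \<Longrightarrow> f u = v"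
    using corresponding_bij[OF Q1(1) Q2(1) C1 C2 root(1)] by blast
  have f_tnode: "f (tnode Q1) = tnode Q2"
    using f_eq[OF corresponding_tnode[OF wf1 wf2]] .
  moreover have "f ` inodes Q1 = inodes Q2"
    using image_inodes_eq[OF f f_tnode wf_qmdd_tnode[OF wf1] wf_qmdd_tnode[OF wf2]] .
  moreover have "ind Q2 (f u) = ind Q1 u \<and>
      (\<forall>k<4. succ Q2 (f u) k = f (succ Q1 u k) \<and> wt Q2 (f u) k = wt Q1 u k)" if "u \<in> inodes Q1" for u
    using corresponding_succ[OF C1 C2 corr[OF inode_in_all_nodes[OF that]] that] f_eq
    by (metis zero_less_numeral)
  ultimately show ?thesis
    unfolding qmdd_iso_def using f f_eq[OF root(1)] root(2) by blast
qed

section \<open>Normal forms of blocks\<close>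

text \<open>A \<open>2^m \<times> 2^m\<close> block is a matrix that vanishes outside \<open>{0..<2^m}\<^sup>2\<close>.\<close>

definition zero_outside :: "nat \<Rightarrow> cmatrix \<Rightarrow> bool" where
  "zero_outside m A \<longleftrightarrow> (\<forall>r c. \<not> (r < 2 ^ m \<and> c < 2 ^ m) \<longrightarrow> A r c = 0)"

definition mat_block :: "nat \<Rightarrow> nat \<Rightarrow> nat \<Rightarrow> cmatrix \<Rightarrow> cmatrix" where
  "mat_block m x y U = (\<lambda>r c. if r < 2 ^ m \<and> c < 2 ^ m then U (x * 2 ^ m + r) (y * 2 ^ m + c) else 0)"

definition quadrant :: "nat \<Rightarrow> nat \<Rightarrow> cmatrix \<Rightarrow> cmatrix" where
  "quadrant m k A = mat_block m (k div 2) (k mod 2) A"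

definition uniform_quadrants :: "nat \<Rightarrow> cmatrix \<Rightarrow> bool" where
  "uniform_quadrants m A \<longleftrightarrow> (\<forall>k<4. quadrant m k A = quadrant m 0 A)"

definition mat_scale :: "complex \<Rightarrow> cmatrix \<Rightarrow> cmatrix" where
  "mat_scale z A = (\<lambda>r c. z * A r c)"

definition first_max_index :: "(nat \<Rightarrow> complex) \<Rightarrow> nat" where
  "first_max_index x = (LEAST k. k < 4 \<and> (\<forall>k'<4. cmod (x k') \<le> cmod (x k)))"

definition first_max :: "(nat \<Rightarrow> complex) \<Rightarrow> complex" where
  "first_max x = x (first_max_index x)"

text \<open>The weight of the normalized edge representing a \<open>2^m \<times> 2^m\<close> block.\<close>
fun top_weight :: "nat \<Rightarrow> cmatrix \<Rightarrow> complex" where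
  "top_weight 0 A = A 0 0"
| "top_weight (Suc m) A =
     (if uniform_quadrants m A then top_weight m (quadrant m 0 A)
      else first_max (\<lambda>k. top_weight m (quadrant m k A)))"

text \<open>Removes the top levels on which all four quadrants agree (rule RS); returns the number of
  remaining levels together with the remaining block.\<close>
fun strip :: "nat \<Rightarrow> cmatrix \<Rightarrow> nat \<times> cmatrix" where
  "strip 0 A = (0, A)"
| "strip (Suc m) A = (if uniform_quadrants m A then strip m (quadrant m 0 A) else (Suc m, A))"

definition normal_form :: "nat \<Rightarrow> cmatrix \<Rightarrow> nat \<times> cmatrix" where
  "normal_form m A = (fst (strip m A), mat_scale (1 / top_weight m A) (snd (strip m A)))"

lemma offset_less_pow2: "(b::nat) \<le> 1 \<Longrightarrow> r < 2 ^ m \<Longrightarrow> b * 2 ^ m + r < 2 ^ Suc m"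
  by (cases b) auto

lemma quadrant_mat_block:
  assumes "k < 4"
  shows "quadrant m k (mat_block (Suc m) x y U) = mat_block m (2 * x + k div 2) (2 * y + k mod 2) U"
proof (intro ext)
  fix r c :: nat
  have "k div 2 \<le> 1" "k mod 2 \<le> 1"
    using assms by auto
  then have "k div 2 * 2 ^ m + r < 2 ^ Suc m" "k mod 2 * 2 ^ m + c < 2 ^ Suc m" if "r < 2 ^ m" "c < 2 ^ m"
    using that by (simp_all only: offset_less_pow2)
  moreover have "x * 2 ^ Suc m + k div 2 * 2 ^ m = (2 * x + k div 2) * 2 ^ m"
    "y * 2 ^ Suc m + k mod 2 * 2 ^ m = (2 * y + k mod 2) * 2 ^ m"
    by (simp_all add: algebra_simps)
  ultimately show "quadrant m k (mat_block (Suc m) x y U) r c = mat_block m (2 * x + k div 2) (2 * y + k mod 2) U r c"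
    unfolding quadrant_def mat_block_def by (auto simp flip: add.assoc)
qed

lemma zero_outside_mat_block: "zero_outside m (mat_block m x y U)"
  by (simp add: zero_outside_def mat_block_def)

lemma zero_outside_eqI:
  assumes "zero_outside m A" "zero_outside m B" "\<And>r c. r < 2 ^ m \<Longrightarrow> c < 2 ^ m \<Longrightarrow> A r c = B r c"
  shows "A = B"
  using assms unfolding zero_outside_def by (metis ext)

lemma zero_outside_mat_scale: "zero_outside m A \<Longrightarrow> zero_outside m (mat_scale z A)"
  by (simp add: zero_outside_def mat_scale_def)

lemma quadrant_mat_scale: "quadrant m k (mat_scale z A) = mat_scale z (quadrant m k A)"
  by (simp add: fun_eq_iff quadrant_def mat_block_def mat_scale_def)

lemma mat_scale_eq_iff: "z \<noteq> 0 \<Longrightarrow> mat_scale z A = mat_scale z B \<longleftrightarrow> A = B"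
  by (simp add: fun_eq_iff mat_scale_def)

lemma mat_scale_mat_scale: "mat_scale z (mat_scale w A) = mat_scale (z * w) A"
  by (simp add: mat_scale_def mult.assoc)

lemma mat_scale_one [simp]: "mat_scale 1 A = A"
  by (simp add: mat_scale_def)

lemma uniform_quadrants_mat_scale:
  "z \<noteq> 0 \<Longrightarrow> uniform_quadrants m (mat_scale z A) \<longleftrightarrow> uniform_quadrants m A"
  by (simp add: uniform_quadrants_def quadrant_mat_scale mat_scale_eq_iff)

lemma entry_eq_quadrant:
  assumes "r < 2 ^ Suc m" "c < 2 ^ Suc m"
  shows "A r c = quadrant m (2 * (r div 2 ^ m) + c div 2 ^ m) A (r mod 2 ^ m) (c mod 2 ^ m)"
proof -
  have "r div 2 ^ m < 2" "c div 2 ^ m < 2"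
    using assms by (simp_all add: less_mult_imp_div_less)
  then show ?thesis
    by (simp add: quadrant_def mat_block_def div_mult_mod_eq)
qed

lemma quadrant_index_less: "(r::nat) < 2 ^ Suc m \<Longrightarrow> c < 2 ^ Suc m \<Longrightarrow> 2 * (r div 2 ^ m) + c div 2 ^ m < 4"
  using less_mult_imp_div_less[of r 2 "2 ^ m"] less_mult_imp_div_less[of c 2 "2 ^ m"] by simp

lemma first_max_index: "first_max_index x < 4" "k < 4 \<Longrightarrow> cmod (x k) \<le> cmod (first_max x)"
proof -
  have "\<exists>k<4. \<forall>k'<4. cmod (x k') \<le> cmod (x k)"
  proof -
    let ?S = "(\<lambda>k. cmod (x k)) ` {..<4::nat}"
    have "Max ?S \<in> ?S"
      by (intro Max_in) (simp_all add: lessThan_empty_iff)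
    then obtain k where "k < 4" "cmod (x k) = Max ?S"
      by auto
    then show ?thesis
      using Max_ge[of ?S] by auto
  qed
  then have "first_max_index x < 4 \<and> (\<forall>k'<4. cmod (x k') \<le> cmod (first_max x))"
    unfolding first_max_index_def first_max_def by (rule LeastI_ex)
  then show "first_max_index x < 4" "k < 4 \<Longrightarrow> cmod (x k) \<le> cmod (first_max x)"
    by simp_all
qed

lemma norm_less_first_max: "k < first_max_index x \<Longrightarrow> cmod (x k) < cmod (first_max x)"
  using not_less_Least[of k "\<lambda>k. k < 4 \<and> (\<forall>k'<4. cmod (x k') \<le> cmod (x k))"] first_max_index[where x = x]
  unfolding first_max_index_def[symmetric] by (force simp: not_le)

lemma first_max_eq_0_iff: "first_max x = 0 \<longleftrightarrow> (\<forall>k<4. x k = 0)"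
  using first_max_index[where x = x] by (force simp: first_max_def)

lemma first_max_eq_1:
  assumes "first_max x = 1"
  shows "\<forall>k<4. cmod (x k) \<le> 1" and "\<exists>k<4. cmod (x k) = 1 \<and> x k = 1 \<and> (\<forall>k'<k. cmod (x k') \<noteq> 1)"
proof -
  show "\<forall>k<4. cmod (x k) \<le> 1"
    using first_max_index(2)[where x = x] assms by simp
  have "\<forall>k'<first_max_index x. cmod (x k') \<noteq> 1"
    using norm_less_first_max[where x = x] assms by fastforce
  then show "\<exists>k<4. cmod (x k) = 1 \<and> x k = 1 \<and> (\<forall>k'<k. cmod (x k') \<noteq> 1)"
    using first_max_index(1)[where x = x] assms unfolding first_max_def by fastforce
qed

lemma first_max_mult: "z \<noteq> 0 \<Longrightarrow> first_max (\<lambda>k. z * x k) = z * first_max x"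
  by (simp add: first_max_def first_max_index_def norm_mult)

lemma top_weight_mat_scale: "z \<noteq> 0 \<Longrightarrow> top_weight m (mat_scale z A) = z * top_weight m A"
proof (induction m arbitrary: A)
  case 0
  then show ?case by (simp add: mat_scale_def)
next
  case (Suc m)
  then show ?case
    by (simp add: uniform_quadrants_mat_scale quadrant_mat_scale first_max_mult)
qed

lemma strip_mat_scale:
  "z \<noteq> 0 \<Longrightarrow> strip m (mat_scale z A) = (fst (strip m A), mat_scale z (snd (strip m A)))"
  by (induction m arbitrary: A) (simp_all add: uniform_quadrants_mat_scale quadrant_mat_scale)

lemma normal_form_mat_scale:
  assumes "z \<noteq> 0"
  shows "normal_form m (mat_scale z A) = normal_form m A"
proof -
  have "1 / (z * top_weight m A) * z = 1 / top_weight m A"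
    using assms by (cases "top_weight m A = 0") auto
  with assms show ?thesis
    by (simp add: normal_form_def top_weight_mat_scale strip_mat_scale mat_scale_mat_scale)
qed

lemma strip_le: "fst (strip m A) \<le> m"
  by (induction m arbitrary: A) (auto simp: le_SucI)

lemma top_weight_strip: "top_weight m A = top_weight (fst (strip m A)) (snd (strip m A))"
  by (induction m arbitrary: A) auto

lemma strip_not_uniform:
  "0 < fst (strip m A) \<Longrightarrow> \<not> uniform_quadrants (fst (strip m A) - 1) (snd (strip m A))"
  by (induction m arbitrary: A) auto

lemma entry_strip:
  "r < 2 ^ m \<Longrightarrow> c < 2 ^ m \<Longrightarrow>
   A r c = snd (strip m A) (r mod 2 ^ fst (strip m A)) (c mod 2 ^ fst (strip m A))"
proof (induction m arbitrary: A r c)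
  case 0
  then show ?case by simp
next
  case (Suc m)
  show ?case
  proof (cases "uniform_quadrants m A")
    case True
    let ?B = "quadrant m 0 A"
    have "quadrant m (2 * (r div 2 ^ m) + c div 2 ^ m) A = ?B"
      using True quadrant_index_less[OF Suc.prems] unfolding uniform_quadrants_def by blast
    then have "A r c = ?B (r mod 2 ^ m) (c mod 2 ^ m)"
      using entry_eq_quadrant[OF Suc.prems, of A] by simp
    also have "\<dots> = snd (strip m ?B) (r mod 2 ^ m mod 2 ^ fst (strip m ?B)) (c mod 2 ^ m mod 2 ^ fst (strip m ?B))"
      by (rule Suc.IH) simp_all
    also have "\<dots> = snd (strip m ?B) (r mod 2 ^ fst (strip m ?B)) (c mod 2 ^ fst (strip m ?B))"
      using strip_le[of m ?B] by (simp add: mod_pow2_mod_pow2)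
    finally show ?thesis
      using True by simp
  next
    case False
    then show ?thesis
      using Suc.prems by simp
  qed
qed

lemma all_zero_iff_quadrants_zero:
  "(\<forall>r c. r < 2 ^ Suc m \<longrightarrow> c < 2 ^ Suc m \<longrightarrow> A r c = 0) \<longleftrightarrow>
   (\<forall>k<4. \<forall>r c. r < 2 ^ m \<longrightarrow> c < 2 ^ m \<longrightarrow> quadrant m k A r c = 0)"
proof
  assume zero: "\<forall>r c. r < 2 ^ Suc m \<longrightarrow> c < 2 ^ Suc m \<longrightarrow> A r c = 0"
  show "\<forall>k<4. \<forall>r c. r < 2 ^ m \<longrightarrow> c < 2 ^ m \<longrightarrow> quadrant m k A r c = 0"
  proof (intro allI impI)
    fix k r c :: nat
    assume "k < 4" "r < 2 ^ m" "c < 2 ^ m"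
    moreover from \<open>k < 4\<close> have "k div 2 \<le> 1" "k mod 2 \<le> 1"
      by auto
    ultimately have "k div 2 * 2 ^ m + r < 2 ^ Suc m" "k mod 2 * 2 ^ m + c < 2 ^ Suc m"
      by (simp_all only: offset_less_pow2)
    with zero show "quadrant m k A r c = 0"
      by (simp add: quadrant_def mat_block_def)
  qed
next
  assume "\<forall>k<4. \<forall>r c. r < 2 ^ m \<longrightarrow> c < 2 ^ m \<longrightarrow> quadrant m k A r c = 0"
  then show "\<forall>r c. r < 2 ^ Suc m \<longrightarrow> c < 2 ^ Suc m \<longrightarrow> A r c = 0"
    using entry_eq_quadrant quadrant_index_less by (metis mod_less_divisor pos2 zero_less_power)
qed

lemma top_weight_eq_0_iff: "top_weight m A = 0 \<longleftrightarrow> (\<forall>r c. r < 2 ^ m \<longrightarrow> c < 2 ^ m \<longrightarrow> A r c = 0)"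
proof (induction m arbitrary: A)
  case 0
  then show ?case by simp
next
  case (Suc m)
  have "top_weight (Suc m) A = 0 \<longleftrightarrow> (\<forall>k<4. \<forall>r c. r < 2 ^ m \<longrightarrow> c < 2 ^ m \<longrightarrow> quadrant m k A r c = 0)"
  proof (cases "uniform_quadrants m A")
    case True
    then have "quadrant m k A = quadrant m 0 A" if "k < 4" for k
      using that unfolding uniform_quadrants_def by blast
    with True show ?thesis
      using Suc.IH[of "quadrant m 0 A"] by (metis top_weight.simps(2) zero_less_numeral)
  next
    case False
    then show ?thesis
      using Suc.IH by (simp add: first_max_eq_0_iff)
  qed
  then show ?case
    using all_zero_iff_quadrants_zero by blast
qed

lemma strip_mat_block:
  "m \<le> n \<Longrightarrow> x < 2 ^ (n - m) \<Longrightarrow> y < 2 ^ (n - m) \<Longrightarrow>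
   \<exists>x' y'. x' < 2 ^ (n - fst (strip m (mat_block m x y U))) \<and> y' < 2 ^ (n - fst (strip m (mat_block m x y U))) \<and>
     snd (strip m (mat_block m x y U)) = mat_block (fst (strip m (mat_block m x y U))) x' y' U"
proof (induction m arbitrary: x y)
  case 0
  then show ?case by auto
next
  case (Suc m)
  show ?case
  proof (cases "uniform_quadrants m (mat_block (Suc m) x y U)")
    case True
    then have "strip (Suc m) (mat_block (Suc m) x y U) = strip m (mat_block m (2 * x) (2 * y) U)"
      using quadrant_mat_block[of 0 m x y U] by simp
    moreover have "n - m = Suc (n - Suc m)"
      using Suc.prems(1) by simp
    then have "2 * x < 2 ^ (n - m)" "2 * y < 2 ^ (n - m)"
      using Suc.prems(2,3) by simp_all
    ultimately show ?thesis
      using Suc.IH Suc.prems(1) by simp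
  next
    case False
    then show ?thesis
      using Suc.prems by auto
  qed
qed

section \<open>Existence\<close>

definition scaled_block :: "nat \<Rightarrow> cmatrix \<Rightarrow> nat \<Rightarrow> cmatrix \<Rightarrow> bool" where
  "scaled_block n U m B \<longleftrightarrow>
     (\<exists>x y z. x < 2 ^ (n - m) \<and> y < 2 ^ (n - m) \<and> z \<noteq> 0 \<and> B = mat_scale z (mat_block m x y U))"

text \<open>The matrices represented by the internal nodes of the diagram of \<open>U\<close>: normal forms of the
  aligned blocks of \<open>U\<close> that are neither zero nor constant.\<close>
definition node_blocks :: "nat \<Rightarrow> cmatrix \<Rightarrow> (nat \<times> cmatrix) set" where
  "node_blocks n U = (\<lambda>(m, x, y). normal_form m (mat_block m x y U)) `
     {(m, x, y). m \<le> n \<and> x < 2 ^ (n - m) \<and> y < 2 ^ (n - m) \<and>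
        top_weight m (mat_block m x y U) \<noteq> 0 \<and> 0 < fst (strip m (mat_block m x y U))}"

lemma scaled_block_mat_block: "x < 2 ^ (n - m) \<Longrightarrow> y < 2 ^ (n - m) \<Longrightarrow> scaled_block n U m (mat_block m x y U)"
  unfolding scaled_block_def by (intro exI[of _ x] exI[of _ y] exI[of _ 1]) simp

lemma zero_outside_scaled_block: "scaled_block n U m B \<Longrightarrow> zero_outside m B"
  unfolding scaled_block_def using zero_outside_mat_block zero_outside_mat_scale by blast

lemma scaled_block_quadrant:
  assumes "scaled_block n U (Suc m) B" "Suc m \<le> n" "k < 4"
  shows "scaled_block n U m (quadrant m k B)"
proof -
  obtain x y z where xy: "x < 2 ^ (n - Suc m)" "y < 2 ^ (n - Suc m)" "z \<noteq> 0"
      and B: "B = mat_scale z (mat_block (Suc m) x y U)"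
    using assms(1) unfolding scaled_block_def by blast
  have "n - m = Suc (n - Suc m)"
    using assms(2) by simp
  then have "2 * x + k div 2 < 2 ^ (n - m)" "2 * y + k mod 2 < 2 ^ (n - m)"
    using xy(1,2) assms(3) by auto
  with xy(3) show ?thesis
    unfolding scaled_block_def B quadrant_mat_scale quadrant_mat_block[OF assms(3)] by blast
qed

lemma finite_node_blocks: "finite (node_blocks n U)"
proof -
  have "{(m, x, y). m \<le> n \<and> x < 2 ^ (n - m) \<and> y < 2 ^ (n - m) \<and>
        top_weight m (mat_block m x y U) \<noteq> 0 \<and> 0 < fst (strip m (mat_block m x y U))}
      \<subseteq> {..n} \<times> {..<2 ^ n} \<times> {..<2 ^ n}"
  proof clarsimp
    fix m x y :: nat
    assume "m \<le> n" "x < 2 ^ (n - m)" "y < 2 ^ (n - m)"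
    moreover have "(2::nat) ^ (n - m) \<le> 2 ^ n"
      by (intro power_increasing) auto
    ultimately show "x < 2 ^ n \<and> y < 2 ^ n"
      by linarith
  qed
  then show ?thesis
    unfolding node_blocks_def by (rule finite_imageI[OF finite_subset]) auto
qed

lemma normal_form_in_node_blocks:
  assumes "m \<le> n" "scaled_block n U m B" "top_weight m B \<noteq> 0" "0 < fst (strip m B)"
  shows "normal_form m B \<in> node_blocks n U"
proof -
  obtain x y z where xy: "x < 2 ^ (n - m)" "y < 2 ^ (n - m)" "z \<noteq> 0"
      and B: "B = mat_scale z (mat_block m x y U)"
    using assms(2) unfolding scaled_block_def by blast
  have "top_weight m (mat_block m x y U) \<noteq> 0" "0 < fst (strip m (mat_block m x y U))"
    using assms(3,4) xy(3) by (simp_all add: B top_weight_mat_scale strip_mat_scale)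
  with assms(1) xy show ?thesis
    unfolding node_blocks_def B normal_form_mat_scale[OF xy(3)] by (intro rev_image_eqI[of "(m, x, y)"]) auto
qed

lemma node_blocks_elem:
  assumes "(m, A) \<in> node_blocks n U"
  shows "0 < m" "m \<le> n" "scaled_block n U m A" "\<not> uniform_quadrants (m - 1) A" "top_weight m A = 1"
proof -
  obtain l x y where l: "l \<le> n" "x < 2 ^ (n - l)" "y < 2 ^ (n - l)"
      "top_weight l (mat_block l x y U) \<noteq> 0" "0 < fst (strip l (mat_block l x y U))"
      and A: "(m, A) = normal_form l (mat_block l x y U)"
    using assms unfolding node_blocks_def by auto
  define S where "S = mat_block l x y U"
  have m: "m = fst (strip l S)" and A: "A = mat_scale (1 / top_weight l S) (snd (strip l S))"
    using A by (simp_all add: normal_form_def S_def)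
  have w: "top_weight l S \<noteq> 0"
    using l(4) by (simp add: S_def)
  show "0 < m"
    using l(5) by (simp add: m S_def)
  show "m \<le> n"
    using strip_le[of l S] l(1) m by simp
  obtain x' y' where xy': "x' < 2 ^ (n - m)" "y' < 2 ^ (n - m)" "snd (strip l S) = mat_block m x' y' U"
    using strip_mat_block[OF l(1-3), of U] by (auto simp: m S_def)
  show "scaled_block n U m A"
    unfolding scaled_block_def A using w xy'
    by (intro exI[of _ x'] exI[of _ y'] exI[of _ "1 / top_weight l S"]) simp
  show "\<not> uniform_quadrants (m - 1) A"
    using strip_not_uniform[of l S] l(5) w by (simp add: m A S_def uniform_quadrants_mat_scale)
  show "top_weight m A = 1"
    using top_weight_strip[of l S] w by (simp add: m A top_weight_mat_scale)
qed

definition edge_target :: "nat \<Rightarrow> (nat \<times> cmatrix \<Rightarrow> nat) \<Rightarrow> nat \<Rightarrow> cmatrix \<Rightarrow> nat" where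
  "edge_target N e m B = (if top_weight m B = 0 \<or> fst (strip m B) = 0 then N else e (normal_form m B))"

text \<open>The diagram whose internal nodes \<open>0..<N\<close> stand for the blocks \<open>d i\<close>, and \<open>e\<close> is
  the inverse enumeration.\<close>
definition block_qmdd :: "nat \<Rightarrow> cmatrix \<Rightarrow> nat \<Rightarrow> (nat \<times> cmatrix \<Rightarrow> nat) \<Rightarrow> (nat \<Rightarrow> nat \<times> cmatrix) \<Rightarrow> qmdd" where
  "block_qmdd n U N e d = \<lparr> inodes = {0..<N}, tnode = N, ind = (\<lambda>i. n - fst (d i)),
     succ = (\<lambda>i k. edge_target N e (fst (d i) - 1) (quadrant (fst (d i) - 1) k (snd (d i)))),
     wt = (\<lambda>i k. top_weight (fst (d i) - 1) (quadrant (fst (d i) - 1) k (snd (d i)))),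
     root = edge_target N e n (mat_block n 0 0 U), root_wt = top_weight n (mat_block n 0 0 U) \<rparr>"

lemma block_qmdd_simps [simp]:
  "inodes (block_qmdd n U N e d) = {0..<N}" "tnode (block_qmdd n U N e d) = N"
  "ind (block_qmdd n U N e d) i = n - fst (d i)"
  "succ (block_qmdd n U N e d) i k = edge_target N e (fst (d i) - 1) (quadrant (fst (d i) - 1) k (snd (d i)))"
  "wt (block_qmdd n U N e d) i k = top_weight (fst (d i) - 1) (quadrant (fst (d i) - 1) k (snd (d i)))"
  "root (block_qmdd n U N e d) = edge_target N e n (mat_block n 0 0 U)"
  "root_wt (block_qmdd n U N e d) = top_weight n (mat_block n 0 0 U)"
  by (simp_all add: block_qmdd_def)

lemma mod_div_pow2_var_val:
  assumes "Suc m \<le> n"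
  shows "r mod 2 ^ Suc m div 2 ^ m = (if var_val n r (n - Suc m) then 1 else 0)"
proof -
  have "n - 1 - (n - Suc m) = m"
    using assms by simp
  moreover have "r mod 2 ^ Suc m div 2 ^ m = r div 2 ^ m mod 2"
    by (metis Nat.add_0_right add_Suc_right div_exp_mod_exp_eq power_Suc0_right)
  ultimately show ?thesis
    unfolding var_val_def by (simp add: odd_iff_mod_2_eq_one)
qed

lemma entry_eq_quadrant_edge_index:
  assumes "Suc m \<le> n"
  shows "A (r mod 2 ^ Suc m) (c mod 2 ^ Suc m) =
    quadrant m (edge_index n (n - Suc m) r c) A (r mod 2 ^ m) (c mod 2 ^ m)"
proof -
  have "A (r mod 2 ^ Suc m) (c mod 2 ^ Suc m) = quadrant m (2 * (r mod 2 ^ Suc m div 2 ^ m) + c mod 2 ^ Suc m div 2 ^ m) A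
      (r mod 2 ^ Suc m mod 2 ^ m) (c mod 2 ^ Suc m mod 2 ^ m)"
    by (rule entry_eq_quadrant) simp_all
  moreover have "r mod 2 ^ Suc m mod 2 ^ m = r mod 2 ^ m" "c mod 2 ^ Suc m mod 2 ^ m = c mod 2 ^ m"
    by (rule mod_pow2_mod_pow2, simp)+
  ultimately show ?thesis
    by (simp only: mod_div_pow2_var_val[OF assms] edge_index_def)
qed

locale block_enumeration =
  fixes n :: nat and U :: cmatrix and N :: nat and d :: "nat \<Rightarrow> nat \<times> cmatrix"
  assumes bij_d: "bij_betw d {0..<N} (node_blocks n U)"
begin

definition e :: "nat \<times> cmatrix \<Rightarrow> nat" where
  "e = the_inv_into {0..<N} d"

abbreviation Q :: qmdd where
  "Q \<equiv> block_qmdd n U N e d"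

lemma e_d: "i < N \<Longrightarrow> e (d i) = i"
  using the_inv_into_f_f[OF bij_betw_imp_inj_on[OF bij_d]] by (simp add: e_def)

lemma e_node_blocks: "P \<in> node_blocks n U \<Longrightarrow> e P < N" "P \<in> node_blocks n U \<Longrightarrow> d (e P) = P"
  using bij_betw_apply[OF bij_betw_the_inv_into[OF bij_d]] f_the_inv_into_f_bij_betw[OF bij_d]
  by (simp_all add: e_def)

lemma node_props:
  assumes "i < N"
  shows "0 < fst (d i)" "fst (d i) \<le> n" "scaled_block n U (fst (d i)) (snd (d i))"
    "\<not> uniform_quadrants (fst (d i) - 1) (snd (d i))" "top_weight (fst (d i)) (snd (d i)) = 1"
proof -
  have "(fst (d i), snd (d i)) \<in> node_blocks n U"
    using bij_betw_apply[OF bij_d] assms by simp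
  then show "0 < fst (d i)" "fst (d i) \<le> n" "scaled_block n U (fst (d i)) (snd (d i))"
    "\<not> uniform_quadrants (fst (d i) - 1) (snd (d i))" "top_weight (fst (d i)) (snd (d i)) = 1"
    by (rule node_blocks_elem)+
qed

lemma scaled_block_child:
  "i < N \<Longrightarrow> k < 4 \<Longrightarrow> scaled_block n U (fst (d i) - 1) (quadrant (fst (d i) - 1) k (snd (d i)))"
  using scaled_block_quadrant[of n U "fst (d i) - 1" "snd (d i)" k] node_props[of i] by simp

lemma edge_target_inode:
  assumes "m \<le> n" "scaled_block n U m B" "top_weight m B \<noteq> 0" "0 < fst (strip m B)"
  shows "edge_target N e m B < N" "d (edge_target N e m B) = normal_form m B"
  using e_node_blocks[OF normal_form_in_node_blocks[OF assms]] assms(3,4) by (simp_all add: edge_target_def)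

lemma edge_target_cases:
  assumes "m \<le> n" "scaled_block n U m B"
  shows "edge_target N e m B = N \<or> edge_target N e m B < N \<and> fst (d (edge_target N e m B)) \<le> m"
  using edge_target_inode[OF assms] strip_le[of m B] by (auto simp: edge_target_def normal_form_def)

lemma wf_qmdd_block_qmdd: "wf_qmdd n Q"
  unfolding wf_qmdd_def
proof (intro conjI ballI allI impI)
  show "finite (inodes Q)" "tnode Q \<notin> inodes Q"
    by simp_all
  have "scaled_block n U n (mat_block n 0 0 U)"
    by (rule scaled_block_mat_block) simp_all
  then show "root Q \<in> all_nodes Q"
    using edge_target_cases[OF order_refl] by (auto simp: all_nodes_def)
  fix i k :: nat
  assume "i \<in> inodes Q"
  then have i: "i < N"
    by simp
  then show "ind Q i < n"
    using node_props(1,2)[of i] by simp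
  assume "k < 4"
  have "fst (d i) - 1 \<le> n"
    using node_props(2)[OF i] by simp
  note target = edge_target_cases[OF this scaled_block_child[OF i \<open>k < 4\<close>]]
  then show "succ Q i k \<in> all_nodes Q"
    using node_props(2)[OF i] by (auto simp: all_nodes_def)
  show "ind Q i < nind n Q (succ Q i k)"
    using target node_props(1,2)[OF i] by (auto simp: nind_def)
qed

lemma nsem_edge_target:
  assumes "m \<le> n" "scaled_block n U m B" "j \<le> n - m" "r < 2 ^ n" "c < 2 ^ n"
    and sem: "\<And>i j. i < N \<Longrightarrow> fst (d i) \<le> m \<Longrightarrow> j \<le> n - fst (d i) \<Longrightarrow>
      nsem n Q i j r c = snd (d i) (r mod 2 ^ fst (d i)) (c mod 2 ^ fst (d i))"
  shows "top_weight m B * nsem n Q (edge_target N e m B) j r c = B (r mod 2 ^ m) (c mod 2 ^ m)"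
proof -
  have entry: "B (r mod 2 ^ m) (c mod 2 ^ m) = snd (strip m B) (r mod 2 ^ fst (strip m B)) (c mod 2 ^ fst (strip m B))"
    using entry_strip[of "r mod 2 ^ m" m "c mod 2 ^ m" B] strip_le[of m B] by (simp add: mod_pow2_mod_pow2)
  consider "top_weight m B = 0" | "top_weight m B \<noteq> 0" "fst (strip m B) = 0" | "top_weight m B \<noteq> 0" "0 < fst (strip m B)"
    by blast
  then show ?thesis
  proof cases
    case 1
    then show ?thesis
      using top_weight_eq_0_iff[of m B] by simp
  next
    case 2
    then show ?thesis
      using entry top_weight_strip[of m B] by (simp add: edge_target_def nsem_terminal)
  next
    case 3
    let ?t = "edge_target N e m B"
    note t = edge_target_inode[OF assms(1,2) 3]
    have "fst (d ?t) \<le> m"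
      using t(2) strip_le[of m B] by (simp add: normal_form_def)
    then have "nsem n Q ?t j r c = snd (d ?t) (r mod 2 ^ fst (d ?t)) (c mod 2 ^ fst (d ?t))"
      using sem[OF t(1)] assms(1,3) by simp
    then show ?thesis
      using 3 t(2) entry by (simp add: normal_form_def mat_scale_def)
  qed
qed

lemma nsem_block_qmdd:
  "i < N \<Longrightarrow> j \<le> n - fst (d i) \<Longrightarrow> r < 2 ^ n \<Longrightarrow> c < 2 ^ n \<Longrightarrow>
   nsem n Q i j r c = snd (d i) (r mod 2 ^ fst (d i)) (c mod 2 ^ fst (d i))"
proof (induction "fst (d i)" arbitrary: i j rule: less_induct)
  case less
  define m where "m = fst (d i) - 1"
  define A where "A = snd (d i)"
  define p where "p = n - Suc m"
  define k where "k = edge_index n p r c"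
  have m: "fst (d i) = Suc m" "Suc m \<le> n"
    using node_props(1,2)[OF less.prems(1)] by (simp_all add: m_def)
  have "nsem n Q i j r c = wt Q i k * nsem n Q (succ Q i k) (Suc p) r c"
    using nsem_node_below[of i Q p n j] less.prems(1,2) m by (simp add: k_def p_def)
  also have "\<dots> = top_weight m (quadrant m k A) * nsem n Q (edge_target N e m (quadrant m k A)) (Suc p) r c"
    using m(1) by (simp add: m_def A_def)
  also have "\<dots> = quadrant m k A (r mod 2 ^ m) (c mod 2 ^ m)"
  proof (rule nsem_edge_target)
    show "scaled_block n U m (quadrant m k A)"
      using scaled_block_child[OF less.prems(1), of k] edge_index_less by (simp add: m_def A_def k_def)
    show "nsem n Q i' j' r c = snd (d i') (r mod 2 ^ fst (d i')) (c mod 2 ^ fst (d i'))"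
      if "i' < N" "fst (d i') \<le> m" "j' \<le> n - fst (d i')" for i' j'
      using less.hyps[OF _ that(1,3)] that(2) less.prems(3,4) m(1) by simp
  qed (use m(2) less.prems(3,4) in \<open>simp_all add: p_def\<close>)
  also have "\<dots> = A (r mod 2 ^ fst (d i)) (c mod 2 ^ fst (d i))"
    using entry_eq_quadrant_edge_index[OF m(2), of A r c] m(1) by (simp add: k_def p_def)
  finally show ?case
    by (simp add: A_def)
qed

lemma qmdd_mat_block_qmdd: "mat_eq (2 ^ n) (qmdd_mat n Q) U"
  unfolding mat_eq_def
proof (intro allI impI)
  fix r c :: nat
  assume rc: "r < 2 ^ n" "c < 2 ^ n"
  have "qmdd_mat n Q r c = top_weight n (mat_block n 0 0 U) * nsem n Q (edge_target N e n (mat_block n 0 0 U)) 0 r c"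
    by (simp add: qmdd_mat_def)
  also have "\<dots> = mat_block n 0 0 U (r mod 2 ^ n) (c mod 2 ^ n)"
    by (rule nsem_edge_target) (use rc nsem_block_qmdd scaled_block_mat_block in auto)
  also have "\<dots> = U r c"
    using rc by (simp add: mat_block_def)
  finally show "qmdd_mat n Q r c = U r c" .
qed

lemma quadrant_node_block:
  assumes "i < N" "k < 4" "r < 2 ^ (fst (d i) - 1)" "c < 2 ^ (fst (d i) - 1)"
  shows "quadrant (fst (d i) - 1) k (snd (d i)) r c = wt Q i k * nsem n Q (succ Q i k) (Suc (n - fst (d i))) r c"
proof -
  define m where "m = fst (d i) - 1"
  define p where "p = n - Suc m"
  have m: "fst (d i) = Suc m" "Suc m \<le> n"
    using node_props(1,2)[OF assms(1)] by (simp_all add: m_def)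
  have p: "p < n" "n - Suc p = m"
    using m(2) by (simp_all add: p_def)
  have levels: "fst (d i) - 1 = m" "n - fst (d i) = p"
    using m(1) by (simp_all add: p_def)
  obtain r' c' where rc': "r' < 2 ^ n" "c' < 2 ^ n" "edge_index n p r' c' = k"
    and low: "r' mod 2 ^ (n - Suc p) = r mod 2 ^ (n - Suc p)" "c' mod 2 ^ (n - Suc p) = c mod 2 ^ (n - Suc p)"
    by (rule exists_edge_index[OF p(1) assms(2)])
  have "r < 2 ^ m" "c < 2 ^ m"
    using assms(3,4) levels(1) by simp_all
  with low p(2) have "r' mod 2 ^ m = r" "c' mod 2 ^ m = c"
    by simp_all
  with rc'(3) have "quadrant m k (snd (d i)) r c = quadrant m (edge_index n p r' c') (snd (d i)) (r' mod 2 ^ m) (c' mod 2 ^ m)"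
    by simp
  also have "\<dots> = snd (d i) (r' mod 2 ^ Suc m) (c' mod 2 ^ Suc m)"
    using entry_eq_quadrant_edge_index[OF m(2), of "snd (d i)" r' c'] by (simp add: p_def)
  also have "\<dots> = nsem n Q i p r' c'"
    using nsem_block_qmdd[OF assms(1) _ rc'(1,2), of p] m(1) by (simp add: p_def)
  also have "\<dots> = wt Q i k * nsem n Q (succ Q i k) (Suc p) r' c'"
    using nsem_node[of i Q p n r' c'] assms(1) m(1) p(1) rc'(3) by (simp add: p_def)
  also have "\<dots> = wt Q i k * nsem n Q (succ Q i k) (Suc p) r c"
    using nsem_mod_eq[OF low] by simp
  finally show ?thesis
    unfolding levels .
qed

lemma iso_nodes_block_qmdd_eq:
  assumes uv: "u < N" "v < N" and iso: "iso_nodes Q u v"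
  shows "u = v"
proof -
  have "n - fst (d u) = n - fst (d v)"
    using iso by (simp add: iso_nodes_def)
  then have level: "fst (d u) = fst (d v)"
    using node_props(2)[OF uv(1)] node_props(2)[OF uv(2)] by linarith
  define m where "m = fst (d u) - 1"
  have m: "fst (d u) = Suc m"
    using node_props(1)[OF uv(1)] by (simp add: m_def)
  have levels: "fst (d u) - 1 = m" "fst (d v) - 1 = m"
    using level by (simp_all add: m_def)
  have quadrants: "quadrant m k (snd (d u)) = quadrant m k (snd (d v))" if k: "k < 4" for k
  proof (rule zero_outside_eqI)
    show "zero_outside m (quadrant m k (snd (d u)))" "zero_outside m (quadrant m k (snd (d v)))"
      by (simp_all add: quadrant_def zero_outside_mat_block)
    have same_edge: "wt Q u k = wt Q v k" "succ Q u k = succ Q v k"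
      using iso k unfolding iso_nodes_def by blast+
    show "quadrant m k (snd (d u)) r c = quadrant m k (snd (d v)) r c" if "r < 2 ^ m" "c < 2 ^ m" for r c
      using quadrant_node_block[OF uv(1) k, of r c] quadrant_node_block[OF uv(2) k, of r c] that
      unfolding levels same_edge level by simp
  qed
  have "snd (d u) = snd (d v)"
  proof (rule zero_outside_eqI)
    show "zero_outside (Suc m) (snd (d u))" "zero_outside (Suc m) (snd (d v))"
      using zero_outside_scaled_block[OF node_props(3)[OF uv(1)]]
        zero_outside_scaled_block[OF node_props(3)[OF uv(2)]] m level by simp_all
    show "snd (d u) r c = snd (d v) r c" if "r < 2 ^ Suc m" "c < 2 ^ Suc m" for r c
      using entry_eq_quadrant[OF that, of "snd (d u)"] entry_eq_quadrant[OF that, of "snd (d v)"]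
        quadrants[OF quadrant_index_less[OF that]] by simp
  qed
  with level have "d u = d v"
    by (simp add: prod_eq_iff)
  then have "e (d u) = e (d v)"
    by simp
  with e_d uv show "u = v"
    by simp
qed

lemma nonredundant_block_qmdd:
  assumes v: "v < N"
  shows "\<not> (\<forall>k<4. succ Q v k = succ Q v 0 \<and> wt Q v k = wt Q v 0)"
proof
  assume same: "\<forall>k<4. succ Q v k = succ Q v 0 \<and> wt Q v k = wt Q v 0"
  define m where "m = fst (d v) - 1"
  have "quadrant m k (snd (d v)) = quadrant m 0 (snd (d v))" if k: "k < 4" for k
  proof (rule zero_outside_eqI)
    show "zero_outside m (quadrant m k (snd (d v)))" "zero_outside m (quadrant m 0 (snd (d v)))"
      by (simp_all add: quadrant_def zero_outside_mat_block)
    have same_edge: "wt Q v k = wt Q v 0" "succ Q v k = succ Q v 0"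
      using same k by blast+
    show "quadrant m k (snd (d v)) r c = quadrant m 0 (snd (d v)) r c" if "r < 2 ^ m" "c < 2 ^ m" for r c
      using quadrant_node_block[OF v k, of r c] quadrant_node_block[OF v zero_less_numeral, of r c] that
      unfolding m_def same_edge by (simp only:)
  qed
  then have "uniform_quadrants m (snd (d v))"
    unfolding uniform_quadrants_def by blast
  with node_props(4)[OF v] show False
    by (simp add: m_def)
qed

lemma reduced_block_qmdd: "reduced Q"
  using iso_nodes_block_qmdd_eq nonredundant_block_qmdd by (auto simp: reduced_def)

lemma normalized_block_qmdd: "normalized Q"
  unfolding normalized_def
proof (intro ballI conjI)
  fix v
  assume "v \<in> inodes Q"
  then have v: "v < N"
    by simp
  define m where "m = fst (d v) - 1"
  have "top_weight (Suc m) (snd (d v)) = 1"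
    using node_props(1,5)[OF v] by (simp add: m_def)
  then have "first_max (\<lambda>k. top_weight m (quadrant m k (snd (d v)))) = 1"
    using node_props(4)[OF v] by (simp add: m_def)
  note normal = first_max_eq_1[OF this]
  show "\<forall>k<4. wt Q v k = 0 \<longrightarrow> succ Q v k = tnode Q"
    by (simp add: edge_target_def)
  show "\<forall>k<4. cmod (wt Q v k) \<le> 1"
    using normal(1) by (simp add: m_def)
  show "\<exists>k<4. cmod (wt Q v k) = 1 \<and> wt Q v k = 1 \<and> (\<forall>k'<k. cmod (wt Q v k') \<noteq> 1)"
    using normal(2) by (simp add: m_def)
qed

end


definition reachable_part :: "qmdd \<Rightarrow> qmdd" where
  "reachable_part Q = Q\<lparr>inodes := {v \<in> inodes Q. (root Q, v) \<in> (edge_rel Q)\<^sup>*}\<rparr>"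

lemma reachable_part_simps [simp]:
  "inodes (reachable_part Q) = {v \<in> inodes Q. (root Q, v) \<in> (edge_rel Q)\<^sup>*}"
  "tnode (reachable_part Q) = tnode Q" "ind (reachable_part Q) = ind Q" "succ (reachable_part Q) = succ Q"
  "wt (reachable_part Q) = wt Q" "root (reachable_part Q) = root Q" "root_wt (reachable_part Q) = root_wt Q"
  by (simp_all add: reachable_part_def)

lemma edge_relI: "v \<in> inodes Q \<Longrightarrow> k < 4 \<Longrightarrow> (v, succ Q v k) \<in> edge_rel Q"
  unfolding edge_rel_def by blast

lemma edge_relE:
  assumes "(u, v) \<in> edge_rel Q"
  obtains k where "u \<in> inodes Q" "k < 4" "v = succ Q u k"
  using assms unfolding edge_rel_def by blast

lemma reachable_succ:
  assumes "(root Q, v) \<in> (edge_rel Q)\<^sup>*" "v \<in> inodes Q" "k < 4"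
  shows "(root Q, succ Q v k) \<in> (edge_rel Q)\<^sup>*"
  using assms(1) edge_relI[OF assms(2,3)] by (rule rtrancl_into_rtrancl)

lemma tnode_reachable:
  assumes wf: "wf_qmdd n Q" and "v \<in> all_nodes Q"
  shows "(v, tnode Q) \<in> (edge_rel Q)\<^sup>*"
  using assms(2)
proof (induction "n - nind n Q v" arbitrary: v rule: less_induct)
  case less
  show ?case
  proof (cases "v \<in> inodes Q")
    case False
    then show ?thesis
      using less.prems by (simp add: all_nodes_def)
  next
    case True
    note child = wf_qmdd_succ[OF wf True zero_less_numeral]
    have "n - nind n Q (succ Q v 0) < n - nind n Q v"
      using child(2) wf_qmdd_nind_le[OF wf, of "succ Q v 0"] True by simp
    then have "(succ Q v 0, tnode Q) \<in> (edge_rel Q)\<^sup>*"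
      using child(1) by (rule less.hyps)
    moreover have "(v, succ Q v 0) \<in> edge_rel Q"
      by (rule edge_relI[OF True zero_less_numeral])
    ultimately show ?thesis
      by (rule converse_rtrancl_into_rtrancl[rotated])
  qed
qed

lemma reachable_in_reachable_part:
  assumes "(root Q, v) \<in> (edge_rel Q)\<^sup>*"
  shows "(root Q, v) \<in> (edge_rel (reachable_part Q))\<^sup>*"
  using assms
proof (induction rule: rtrancl_induct)
  case base
  then show ?case by simp
next
  case (step u v)
  from step(2) obtain k where "u \<in> inodes Q" "k < 4" "v = succ Q u k"
    by (rule edge_relE)
  with step(1) have "(u, v) \<in> edge_rel (reachable_part Q)"
    using edge_relI[of u "reachable_part Q" k] by simp
  with step.IH show ?case
    by (rule rtrancl_into_rtrancl)
qed

lemma nsem_reachable_part: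
  "(v \<in> inodes Q \<Longrightarrow> (root Q, v) \<in> (edge_rel Q)\<^sup>*) \<Longrightarrow> nsem n (reachable_part Q) v j r c = nsem n Q v j r c"
proof (induction n Q v j r c rule: nsem.induct)
  case (1 n Q v j r c)
  show ?case
  proof (cases "n \<le> j")
    case True
    then show ?thesis
      by (simp add: nsem_beyond)
  next
    case False
    show ?thesis
    proof (cases "v \<in> inodes Q \<and> ind Q v = j")
      case True
      let ?k = "edge_index n j r c"
      have "succ Q v ?k \<in> inodes Q \<Longrightarrow> (root Q, succ Q v ?k) \<in> (edge_rel Q)\<^sup>*"
        using reachable_succ[of Q v ?k] True "1.prems" edge_index_less by blast
      then have "nsem n (reachable_part Q) (succ Q v ?k) (Suc j) r c = nsem n Q (succ Q v ?k) (Suc j) r c"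
        using "1.IH"(1)[OF False True] by (simp add: edge_index_def)
      with True "1.prems" False show ?thesis
        using nsem_node[of v "reachable_part Q" j n r c] nsem_node[of v Q j n r c] by simp
    next
      case False
      then have "\<not> (v \<in> inodes (reachable_part Q) \<and> ind (reachable_part Q) v = j)"
        by simp
      with False "1.IH"(2)[OF \<open>\<not> n \<le> j\<close> False "1.prems"] show ?thesis
        by (simp add: nsem_pass)
    qed
  qed
qed

lemma is_qmdd_reachable_part:
  assumes wf: "wf_qmdd n Q"
  shows "is_qmdd n (reachable_part Q)"
  unfolding is_qmdd_iff_wf_qmdd wf_qmdd_def
proof (intro conjI ballI allI impI)
  have root: "root Q \<in> all_nodes Q"
    using wf by (simp add: wf_qmdd_def)
  show "finite (inodes (reachable_part Q))" "tnode (reachable_part Q) \<notin> inodes (reachable_part Q)"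
    using wf by (simp_all add: wf_qmdd_def)
  show "root (reachable_part Q) \<in> all_nodes (reachable_part Q)"
    using root by (auto simp: all_nodes_def)
  fix v
  assume v: "v \<in> all_nodes (reachable_part Q)"
  show "(root (reachable_part Q), v) \<in> (edge_rel (reachable_part Q))\<^sup>*"
  proof (cases "v = tnode Q")
    case True
    then show ?thesis
      using reachable_in_reachable_part[OF tnode_reachable[OF wf root]] by simp
  next
    case False
    then show ?thesis
      using v reachable_in_reachable_part by (auto simp: all_nodes_def)
  qed
next
  fix v k
  assume "v \<in> inodes (reachable_part Q)"
  then have v: "v \<in> inodes Q" "(root Q, v) \<in> (edge_rel Q)\<^sup>*"
    by simp_all
  then show "ind (reachable_part Q) v < n"
    using wf_qmdd_ind[OF wf] by simp
  assume "k < (4::nat)"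
  note child = wf_qmdd_succ[OF wf v(1) this] and reach = reachable_succ[OF v(2,1) this]
  show "succ (reachable_part Q) v k \<in> all_nodes (reachable_part Q)"
    using child(1) reach by (auto simp: all_nodes_def)
  show "ind (reachable_part Q) v < nind n (reachable_part Q) (succ (reachable_part Q) v k)"
    using child(2) reach by (simp add: nind_def split: if_splits)
qed

lemma reduced_reachable_part: "reduced Q \<Longrightarrow> reduced (reachable_part Q)"
  by (simp add: reduced_def iso_nodes_def)

lemma normalized_reachable_part: "normalized Q \<Longrightarrow> normalized (reachable_part Q)"
  by (simp add: normalized_def)

lemma qmdd_mat_reachable_part: "qmdd_mat n (reachable_part Q) = qmdd_mat n Q"
  by (simp add: fun_eq_iff qmdd_mat_def nsem_reachable_part)

lemma qmdd_exists: "\<exists>Q. is_qmdd n Q \<and> reduced Q \<and> normalized Q \<and> mat_eq (2 ^ n) (qmdd_mat n Q) U"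
proof -
  obtain d where "bij_betw d {0..<card (node_blocks n U)} (node_blocks n U)"
    using ex_bij_betw_nat_finite[OF finite_node_blocks] by blast
  then interpret block_enumeration n U "card (node_blocks n U)" d
    by unfold_locales
  show ?thesis
    using is_qmdd_reachable_part[OF wf_qmdd_block_qmdd] reduced_reachable_part[OF reduced_block_qmdd]
      normalized_reachable_part[OF normalized_block_qmdd] qmdd_mat_block_qmdd
    by (auto simp: qmdd_mat_reachable_part)
qed

lemma ltqmdd_exists:
  assumes "is_lin_trans n \<pi>"
  shows "\<exists>Q. is_ltqmdd n (Q, \<pi>) \<and> lt_reduced (Q, \<pi>) \<and> lt_normalized (Q, \<pi>) \<and>
    mat_eq (2 ^ n) (ltqmdd_sem n (Q, \<pi>)) U"
proof -
  obtain M where M: "mat_eq (2 ^ n) (lt_mat n \<pi> M) U"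
    using lt_mat_surj[OF assms] .
  obtain Q where "is_qmdd n Q" "reduced Q" "normalized Q" "mat_eq (2 ^ n) (qmdd_mat n Q) M"
    using qmdd_exists by blast
  with M assms show ?thesis
    using mat_eq_lt_mat_iff[OF assms, of "qmdd_mat n Q" M]
    by (auto simp: is_ltqmdd_def lt_reduced_def lt_normalized_def ltqmdd_sem_def mat_eq_def)
qed

lemma ltqmdd_iso_if_sem_eq:
  assumes "is_ltqmdd n (Q1, \<pi>)" "lt_reduced (Q1, \<pi>)" "lt_normalized (Q1, \<pi>)"
    and "is_ltqmdd n (Q2, \<pi>)" "lt_reduced (Q2, \<pi>)" "lt_normalized (Q2, \<pi>)"
    and eq: "mat_eq (2 ^ n) (ltqmdd_sem n (Q1, \<pi>)) (ltqmdd_sem n (Q2, \<pi>))"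
    and "i < 2 ^ n" "j < 2 ^ n" "ltqmdd_sem n (Q1, \<pi>) i j \<noteq> 0"
  shows "ltqmdd_iso (Q1, \<pi>) (Q2, \<pi>)"
proof -
  have lt: "is_lin_trans n \<pi>"
    using assms(1) by (simp add: is_ltqmdd_def)
  have mat: "mat_eq (2 ^ n) (qmdd_mat n Q1) (qmdd_mat n Q2)"
    using eq mat_eq_lt_mat_iff[OF lt] by (simp add: ltqmdd_sem_def)
  have "ltqmdd_sem n (Q2, \<pi>) i j \<noteq> 0"
    using eq assms(8-10) by (simp add: mat_eq_def)
  with assms(10) have "root_wt Q1 \<noteq> 0" "root_wt Q2 \<noteq> 0"
    by (auto simp: ltqmdd_sem_def lt_mat_def qmdd_mat_def)
  with assms(1-6) mat show ?thesis
    by (auto simp: is_ltqmdd_def lt_reduced_def lt_normalized_def ltqmdd_iso_def intro: qmdd_iso_if_mat_eq)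
qed

lemma unitary_mat_nonzero_entry:
  assumes "unitary_mat (2 ^ n) U"
  shows "\<exists>i<2 ^ n. U i 0 \<noteq> 0"
proof (rule ccontr)
  assume "\<not> ?thesis"
  then have "(\<Sum>k<2 ^ n. cnj (U k 0) * U k 0) = 0"
    by simp
  moreover have "(\<Sum>k<2 ^ n. cnj (U k 0) * U k 0) = 1"
    using assms by (simp add: unitary_mat_def)
  ultimately show False
    by simp
qed

theorem theorem3p7:
  fixes n :: nat and \<pi> :: "nat set list" and U :: cmatrix
  assumes "n \<ge> 1"
    and "is_lin_trans n \<pi>"
    and "unitary_mat (2 ^ n) U"
  shows "(\<exists>Q. is_ltqmdd n (Q, \<pi>) \<and> lt_reduced (Q, \<pi>) \<and> lt_normalized (Q, \<pi>) \<and>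
             mat_eq (2 ^ n) (ltqmdd_sem n (Q, \<pi>)) U) \<and>
         (\<forall>Q1 Q2.
           is_ltqmdd n (Q1, \<pi>) \<and> lt_reduced (Q1, \<pi>) \<and> lt_normalized (Q1, \<pi>) \<and>
           mat_eq (2 ^ n) (ltqmdd_sem n (Q1, \<pi>)) U \<and>
           is_ltqmdd n (Q2, \<pi>) \<and> lt_reduced (Q2, \<pi>) \<and> lt_normalized (Q2, \<pi>) \<and>
           mat_eq (2 ^ n) (ltqmdd_sem n (Q2, \<pi>)) U
           \<longrightarrow> ltqmdd_iso (Q1, \<pi>) (Q2, \<pi>))"
proof (intro conjI allI impI)
  show "\<exists>Q. is_ltqmdd n (Q, \<pi>) \<and> lt_reduced (Q, \<pi>) \<and> lt_normalized (Q, \<pi>) \<and>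
      mat_eq (2 ^ n) (ltqmdd_sem n (Q, \<pi>)) U"
    using ltqmdd_exists[OF assms(2)] .
next
  fix Q1 Q2
  assume Q: "is_ltqmdd n (Q1, \<pi>) \<and> lt_reduced (Q1, \<pi>) \<and> lt_normalized (Q1, \<pi>) \<and>
      mat_eq (2 ^ n) (ltqmdd_sem n (Q1, \<pi>)) U \<and>
      is_ltqmdd n (Q2, \<pi>) \<and> lt_reduced (Q2, \<pi>) \<and> lt_normalized (Q2, \<pi>) \<and>
      mat_eq (2 ^ n) (ltqmdd_sem n (Q2, \<pi>)) U"
  obtain i where "i < 2 ^ n" "U i 0 \<noteq> 0"
    using unitary_mat_nonzero_entry[OF assms(3)] by blast
  with Q show "ltqmdd_iso (Q1, \<pi>) (Q2, \<pi>)"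
    by (intro ltqmdd_iso_if_sem_eq[of n Q1 \<pi> Q2 i 0]) (auto simp: mat_eq_def)
qed

end
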